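(* Let $\mathbb G=V_1\times V_2$ be a step-two Carnot group of rank $r\geq 3$. The following are equivalent: (i) $\mathcal A_h(\mathbb G)=\mathcal A(V_1\times V_2)$; (ii) $\oplus_{k=n-r}^{n-3}\Lambda^k(\pi)=\{0\}$ for all integers $n\geq r$ and all surjective Carnot morphisms $\pi:\mathbb F_n\to\mathbb G$; (iii) $\Lambda^{r-3}(\pi)=\{0\}$ for some surjective Carnot morphism $\pi:\mathbb F_r\to\mathbb G$; (iv) $\Lambda^{n-3}(\pi)=\{0\}$ for some integer $n\geq r$ and some surjective Carnot morphism $\pi:\mathbb F_n\to\mathbb G$.
   Context: A step-two Carnot group is $\mathbb G=V_1\times V_2$, where $V_1,V_2$ are finite-dimensional real vector spaces with $V_2\neq\{0\}$, equipped with a bilinear skew-symmetric map $[\cdot,\cdot]:V_1\times V_1\to V_2$ with $\operatorname{span}\{[x,x']:x,x'\in V_1\}=V_2$, and group law $(x,z)\cdot(x',z')=(x+x',z+z'+[x,x'])$; its rank is $\dim V_1$. $\mathcal A_h(\mathbb G)$ is the space of $h$-affine maps $f:\mathbb G\to\mathbb R$, i.e. such that for all $(x,z)\in\mathbb G$, $y\in V_1$, $t\mapsto f((x,z)\cdot(ty,0))$ is affine; $\mathcal A(V_1\times V_2)$ is the space of maps $V_1\times V_2\to\mathbb R$ that are affine in the usual vector-space sense. $\mathbb F_n=\Lambda^1(\mathbb R^n)\times\Lambda^2(\mathbb R^n)$ with bracket $[\theta,\theta']=\theta\wedge\theta'$ is the free step-two Carnot group of rank $n$. A Carnot morphism $\pi:\mathbb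 G\to\mathbb G'$ is a map $\pi(x,z)=(\pi_1(x),\pi_2(z))$ with $\pi_1,\pi_2$ linear and $\pi_2([x,y])=[\pi_1(x),\pi_1(y)]'$. For $\eta\in\Lambda^k(\mathbb R^n)$, $\operatorname{Anh}^{1,2}_\wedge\eta:=\{(\theta,\omega)\in\mathbb F_n:\theta\wedge\eta=0,\ \omega\wedge\eta=0\}$, and for a Carnot morphism $\pi:\mathbb F_n\to\mathbb G$, $\Lambda^k(\pi):=\{\eta\in\Lambda^k(\mathbb R^n):\ker\pi\subset\operatorname{Anh}^{1,2}_\wedge\eta\}$. *)

theory Defs
  imports "HOL-Analysis.Analysis"
begin

text \<open>A step-two Carnot group is given by its bracket br : V1 x V1 -> V2
 (V1, V2 finite-dimensional real vector spaces, modelled as euclidean spaces;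
 V2 is automatically nonzero since DIM >= 1).\<close>

definition step2_carnot :: "('a::euclidean_space \<Rightarrow> 'a \<Rightarrow> 'b::euclidean_space) \<Rightarrow> bool" where
  "step2_carnot br \<longleftrightarrow> bilinear br \<and> (\<forall>x y. br x y = - br y x)
     \<and> span {br x y | x y. True} = UNIV"

definition carnot_mult :: "('a::euclidean_space \<Rightarrow> 'a \<Rightarrow> 'b::euclidean_space)
   \<Rightarrow> 'a \<times> 'b \<Rightarrow> 'a \<times> 'b \<Rightarrow> 'a \<times> 'b" where
  "carnot_mult br p q = (fst p + fst q, snd p + snd q + br (fst p) (fst q))"

definition h_affine :: "('a::euclidean_space \<Rightarrow> 'a \<Rightarrow> 'b::euclidean_space)
   \<Rightarrow> ('a \<times> 'b \<Rightarrow> real) \<Rightarrow> bool" where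
  "h_affine br f \<longleftrightarrow> (\<forall>p y. \<exists>a b. \<forall>t::real.
      f (carnot_mult br p (t *\<^sub>R y, 0)) = a + b * t)"

definition affine_fun :: "('v::real_vector \<Rightarrow> real) \<Rightarrow> bool" where
  "affine_fun f \<longleftrightarrow> (\<exists>c L. linear L \<and> (\<forall>p. f p = c + L p))"

text \<open>A form is a coefficient function on finite index sets: the k-form
  \<Sum>_I f(I) e_I, where e_I = e_{i1} \<and> ... \<and> e_{ik} with i1 < ... < ik.
  Lam n k is \<Lambda>^k(R^n), indices in {0..<n}.\<close>

type_synonym form = "nat set \<Rightarrow> real"

definition Lam :: "nat \<Rightarrow> nat \<Rightarrow> form set" where
  "Lam n k = {f. \<forall>S. f S \<noteq> 0 \<longrightarrow> S \<subseteq> {..<n} \<and> card S = k}"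

definition zero_form :: form where
  "zero_form = (\<lambda>S. 0)"

text \<open>Sign with e_I \<and> e_J = wsign I J e_{I \<union> J} for disjoint I, J.\<close>
definition wsign :: "nat set \<Rightarrow> nat set \<Rightarrow> real" where
  "wsign I J = (-1) ^ card {(i, j). i \<in> I \<and> j \<in> J \<and> j < i}"

definition wedge :: "form \<Rightarrow> form \<Rightarrow> form" where
  "wedge f g = (\<lambda>K. \<Sum>I\<in>Pow K. wsign I (K - I) * f I * g (K - I))"

definition lin_on :: "form set \<Rightarrow> (form \<Rightarrow> 'v::real_vector) \<Rightarrow> bool" where
  "lin_on A L \<longleftrightarrow> (\<forall>f\<in>A. \<forall>g\<in>A. L (\<lambda>S. f S + g S) = L f + L g)
      \<and> (\<forall>c. \<forall>f\<in>A. L (\<lambda>S. c * f S) = c *\<^sub>R L f)"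

text \<open>pi(theta, omega) = (pi1 theta, pi2 omega) is a Carnot morphism F_n -> G.\<close>
definition carnot_morph_free :: "nat \<Rightarrow> ('a::euclidean_space \<Rightarrow> 'a \<Rightarrow> 'b::euclidean_space)
   \<Rightarrow> (form \<Rightarrow> 'a) \<Rightarrow> (form \<Rightarrow> 'b) \<Rightarrow> bool" where
  "carnot_morph_free n br pi1 pi2 \<longleftrightarrow> lin_on (Lam n 1) pi1 \<and> lin_on (Lam n 2) pi2
     \<and> (\<forall>\<theta>\<in>Lam n 1. \<forall>\<theta>'\<in>Lam n 1. pi2 (wedge \<theta> \<theta>') = br (pi1 \<theta>) (pi1 \<theta>'))"

definition surj_carnot_morph_free :: "nat \<Rightarrow> ('a::euclidean_space \<Rightarrow> 'a \<Rightarrow> 'b::euclidean_space)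
   \<Rightarrow> (form \<Rightarrow> 'a) \<Rightarrow> (form \<Rightarrow> 'b) \<Rightarrow> bool" where
  "surj_carnot_morph_free n br pi1 pi2 \<longleftrightarrow> carnot_morph_free n br pi1 pi2
     \<and> pi1 ` Lam n 1 = UNIV \<and> pi2 ` Lam n 2 = UNIV"

definition ker_morph :: "nat \<Rightarrow> (form \<Rightarrow> 'a::real_vector) \<Rightarrow> (form \<Rightarrow> 'b::real_vector)
   \<Rightarrow> (form \<times> form) set" where
  "ker_morph n pi1 pi2 = {(\<theta>, \<omega>). \<theta> \<in> Lam n 1 \<and> \<omega> \<in> Lam n 2 \<and> pi1 \<theta> = 0 \<and> pi2 \<omega> = 0}"

definition Anh12 :: "nat \<Rightarrow> form \<Rightarrow> (form \<times> form) set" where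
  "Anh12 n \<eta> = {(\<theta>, \<omega>). \<theta> \<in> Lam n 1 \<and> \<omega> \<in> Lam n 2
      \<and> wedge \<theta> \<eta> = zero_form \<and> wedge \<omega> \<eta> = zero_form}"

definition LamPi :: "nat \<Rightarrow> nat \<Rightarrow> (form \<Rightarrow> 'a::real_vector) \<Rightarrow> (form \<Rightarrow> 'b::real_vector)
   \<Rightarrow> form set" where
  "LamPi n k pi1 pi2 = {\<eta> \<in> Lam n k. ker_morph n pi1 pi2 \<subseteq> Anh12 n \<eta>}"

end

(*
  An h-affine map f is affine along horizontal lines in x and along vertical lines in bracket
  directions; since differencing twice along a bracket kills f, finitely many vertical differences
  along a basis of brackets vanish, and f is a quadratic polynomial c + L(x,z) + Phi(x,z) + Q(z,z).
  Along the horizontal line t |-> (x + t y, t [x,y]) its t^2-coefficient is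
  Phi(y,[x,y]) + Q([x,y],[x,y]).  Hence A_h(G) = A(V_1 x V_2) iff every bilinear
  Phi : V_1 x V_2 -> R with Phi(y,[x,y]) = 0 (a bracket annihilator) is zero.

  For a surjective Carnot morphism pi : F_n -> G and eta in Lambda^k(pi), the pairing
  (pi_1 theta, pi_2 omega) |-> (theta /\ omega /\ eta)(K) is well defined because ker pi annihilates
  eta, and it is a bracket annihilator; if eta <> 0 and k + 3 <= n, a suitable K makes it nonzero.
  Conversely, a bracket annihilator makes (u,v,w) |-> Phi(u,[v,w]) alternating, and its values on
  the generators are the coefficients of an (n-3)-form eta with
  (theta /\ omega /\ eta)({0..n-1}) = Phi(pi_1 theta, pi_2 omega); such an eta lies in
  Lambda^{n-3}(pi) and is nonzero when Phi is.  Sending the generators of F_r to a basis of V_1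
  gives a surjective morphism F_r -> G, so all four conditions say that there is no nonzero
  bracket annihilator.
*)

theory Submission
  imports Defs
begin

section \<open>h-affine maps and bracket annihilators\<close>

definition real_affine :: "(real \<Rightarrow> real) \<Rightarrow> bool" where
  "real_affine \<phi> \<longleftrightarrow> (\<exists>a b. \<forall>t. \<phi> t = a + b * t)"

lemma real_affine_eq: "real_affine \<phi> \<Longrightarrow> \<phi> t = \<phi> 0 + (\<phi> 1 - \<phi> 0) * t"
  unfolding real_affine_def by auto

lemma real_affine_lincomb:
  assumes "real_affine \<phi>" "real_affine \<psi>"
  shows "real_affine (\<lambda>t. \<alpha> * \<phi> t + \<beta> * \<psi> t + \<gamma>)"
proof -
  obtain a b a' b' where "\<And>t. \<phi> t = a + b * t" "\<And>t. \<psi> t = a' + b' * t"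
    using assms unfolding real_affine_def by blast
  then have "\<And>t. \<alpha> * \<phi> t + \<beta> * \<psi> t + \<gamma> = (\<alpha> * a + \<beta> * a' + \<gamma>) + (\<alpha> * b + \<beta> * b') * t"
    by (simp add: algebra_simps)
  then show ?thesis
    unfolding real_affine_def by blast
qed

lemma real_affine_quadratic_coeff:
  assumes "real_affine (\<lambda>t. \<alpha> + \<beta> * t + \<gamma> * t\<^sup>2)"
  shows "\<gamma> = 0"
  using real_affine_eq[OF assms, of "-1"] real_affine_eq[OF assms, of 1] by (simp add: power2_eq_square)

lemma affine_funI_lines:
  fixes h :: "'v::real_vector \<Rightarrow> real"
  assumes lines: "\<And>x y. real_affine (\<lambda>t. h (x + t *\<^sub>R y))"
  shows "affine_fun h"
proof -
  define L where "L x = h x - h 0" for x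
  have scale: "L (t *\<^sub>R x) = t * L x" for t x
    using real_affine_eq[OF lines[of 0 x], of t] by (simp add: L_def)
  have mid: "h ((1/2) *\<^sub>R (x + y)) = h x + (h y - h x) * (1/2)" for x y
  proof -
    have "x + (1/2) *\<^sub>R (y - x) = (1/2) *\<^sub>R (x + y)"
      by (simp add: algebra_simps flip: scaleR_add_left)
    then show ?thesis
      using real_affine_eq[OF lines[of x "y - x"], of "1/2"] by simp
  qed
  have "L (x + y) = L x + L y" for x y
    using mid[of x y] scale[of "1/2" "x + y"] unfolding L_def by (simp add: field_simps)
  then have "linear L"
    by (intro linearI) (simp_all add: scale)
  then show ?thesis
    unfolding affine_fun_def by (intro exI[of _ "h 0"] exI[of _ L]) (simp add: L_def)
qed

lemma h_affine_iff: "h_affine br f \<longleftrightarrow> (\<forall>p y. real_affine (\<lambda>t. f (carnot_mult br p (t *\<^sub>R y, 0))))"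
  unfolding h_affine_def real_affine_def ..

lemma h_affine_diff:
  assumes "h_affine br f" "h_affine br g"
  shows "h_affine br (\<lambda>p. f p - g p)"
  using real_affine_lincomb[of _ _ 1 "-1" 0] assms unfolding h_affine_iff by simp

lemma h_affine_vertical_translate:
  assumes "h_affine br g"
  shows "h_affine br (\<lambda>p. g (fst p, snd p + \<zeta>))"
proof -
  have "(fst (carnot_mult br p q), snd (carnot_mult br p q) + \<zeta>) = carnot_mult br (fst p, snd p + \<zeta>) q"
    for p q :: "'a \<times> 'b"
    by (simp add: carnot_mult_def algebra_simps)
  then show ?thesis
    using assms unfolding h_affine_iff by simp
qed

definition vdiff :: "'b::real_vector \<Rightarrow> ('a \<times> 'b \<Rightarrow> real) \<Rightarrow> 'a \<times> 'b \<Rightarrow> real" where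
  "vdiff \<zeta> g = (\<lambda>p. g (fst p, snd p + \<zeta>) - g p)"

lemma vdiff_commute: "vdiff a (vdiff b g) = vdiff b (vdiff a g)"
  unfolding vdiff_def by (auto simp: algebra_simps)

lemma fold_vdiff_commute: "fold vdiff L (vdiff a g) = vdiff a (fold vdiff L g)"
  by (induction L arbitrary: g) (simp_all, metis vdiff_commute)

lemma fold_vdiff_zero: "fold vdiff L (\<lambda>p. 0) = (\<lambda>p. 0)"
  by (induction L) (simp_all add: vdiff_def)

lemma h_affine_vdiff: "h_affine br g \<Longrightarrow> h_affine br (vdiff \<zeta> g)"
  unfolding vdiff_def by (intro h_affine_diff h_affine_vertical_translate)

lemma h_affine_fold_vdiff: "h_affine br g \<Longrightarrow> h_affine br (fold vdiff L g)"
  by (induction L arbitrary: g) (simp_all add: h_affine_vdiff)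

lemma bilinearI:
  assumes "\<And>x y z. \<Phi> (x + y) z = \<Phi> x z + \<Phi> y z"
    and "\<And>x y z. \<Phi> x (y + z) = \<Phi> x y + \<Phi> x z"
    and "\<And>c x y. \<Phi> (c *\<^sub>R x) y = c *\<^sub>R \<Phi> x y"
    and "\<And>c x y. \<Phi> x (c *\<^sub>R y) = c *\<^sub>R \<Phi> x y"
  shows "bilinear \<Phi>"
  unfolding bilinear_def using assms by (auto intro!: linearI)

lemma bilinear_zero: "bilinear (\<lambda>x y. 0)"
  by (rule bilinearI) simp_all

lemma bilinear_affine_fun_eq_zero:
  assumes \<Phi>: "bilinear \<Phi>" and "affine_fun (\<lambda>p. \<Phi> (fst p) (snd p))"
  shows "\<Phi> = (\<lambda>x z. 0)"
proof -
  obtain c L where L: "linear L" and \<Phi>L: "\<And>x z. \<Phi> x z = c + L (x, z)"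
    using assms(2) unfolding affine_fun_def by auto
  have "c = 0"
    using \<Phi>L[of 0 0] linear_0[OF L] by (simp add: bilinear_lzero[OF \<Phi>] zero_prod_def)
  have "\<Phi> x z = \<Phi> x 0 + \<Phi> 0 z" for x z
    using linear_add[OF L, of "(x, 0)" "(0, z)"] \<Phi>L[of x z] \<Phi>L[of x 0] \<Phi>L[of 0 z] \<open>c = 0\<close>
    by simp
  then show ?thesis
    by (simp add: bilinear_lzero[OF \<Phi>] bilinear_rzero[OF \<Phi>] fun_eq_iff)
qed

definition bracket_annihilator :: "('a \<Rightarrow> 'a \<Rightarrow> 'b) \<Rightarrow> ('a::real_vector \<Rightarrow> 'b::real_vector \<Rightarrow> real) \<Rightarrow> bool" where
  "bracket_annihilator br \<Phi> \<longleftrightarrow> bilinear \<Phi> \<and> (\<forall>x y. \<Phi> y (br x y) = 0)"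

locale step2_carnot_group =
  fixes br :: "'a::euclidean_space \<Rightarrow> 'a \<Rightarrow> 'b::euclidean_space"
  assumes step2: "step2_carnot br"
begin

lemma bilinear_br: "bilinear br"
  using step2 unfolding step2_carnot_def by blast

lemma br_antisym: "br x y = - br y x"
  using step2 unfolding step2_carnot_def by blast

lemma br_self [simp]: "br x x = 0"
proof -
  have "2 *\<^sub>R br x x = 0"
    using br_antisym[of x x] by (simp add: scaleR_2 eq_neg_iff_add_eq_0)
  then show ?thesis
    by simp
qed

lemma span_brackets: "span {br x y | x y. True} = UNIV"
  using step2 unfolding step2_carnot_def by blast

lemmas br_linear_simps = bilinear_ladd[OF bilinear_br] bilinear_radd[OF bilinear_br]
  bilinear_lsub[OF bilinear_br] bilinear_rsub[OF bilinear_br]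
  bilinear_lmul[OF bilinear_br] bilinear_rmul[OF bilinear_br]
  bilinear_lneg[OF bilinear_br] bilinear_rneg[OF bilinear_br]
  bilinear_lzero[OF bilinear_br] bilinear_rzero[OF bilinear_br]

lemma h_affine_horizontal_line:
  "h_affine br f \<Longrightarrow> real_affine (\<lambda>t. f (x + t *\<^sub>R y, z + t *\<^sub>R br x y))"
  unfolding h_affine_iff by (drule spec[of _ "(x, z)"]) (simp add: carnot_mult_def br_linear_simps)

lemma h_affine_vertical_line:
  assumes f: "h_affine br f"
  shows "real_affine (\<lambda>c. f (x, z + c *\<^sub>R br u v))"
proof -
  \<comment> \<open>\<open>(x, z + c [u, v])\<close> is the midpoint of a horizontal segment of direction \<open>u + c v\<close>;
    as \<open>c\<close> varies, both endpoints move along horizontal lines.\<close>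
  let ?right = "\<lambda>c. f ((x + u) + c *\<^sub>R v, (z + br x u) + c *\<^sub>R br (x + u) v)"
  let ?left = "\<lambda>c. f ((x - u) + c *\<^sub>R (- v), (z - br x u) + c *\<^sub>R br (x - u) (- v))"
  have "f (x, z + c *\<^sub>R br u v) = (1/2) * ?right c + (1/2) * ?left c + 0" for c
  proof -
    have "real_affine (\<lambda>t. f (x + t *\<^sub>R (u + c *\<^sub>R v), (z + c *\<^sub>R br u v) + t *\<^sub>R br x (u + c *\<^sub>R v)))"
      by (rule h_affine_horizontal_line[OF f])
    from real_affine_eq[OF this, of "-1"] show ?thesis
      by (simp add: br_linear_simps algebra_simps)
  qed
  then show ?thesis
    using real_affine_lincomb[OF h_affine_horizontal_line h_affine_horizontal_line, OF f f] by (simp only:)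
qed

lemma h_affine_line_in_first_factor:
  assumes f: "h_affine br f"
  shows "real_affine (\<lambda>t. f (x + t *\<^sub>R y, z))"
proof -
  \<comment> \<open>The horizontal line through \<open>(x + t y, z)\<close> of direction \<open>x - 3t y\<close> meets, at the
    parameters \<open>1\<close> and \<open>-1/3\<close>, points that move along horizontal lines through \<open>(2x, z)\<close> and
    \<open>(2x/3, z)\<close> as \<open>t\<close> varies.\<close>
  let ?right = "\<lambda>t. f (2 *\<^sub>R x + t *\<^sub>R (-2 *\<^sub>R y), z + t *\<^sub>R br (2 *\<^sub>R x) (-2 *\<^sub>R y))"
  let ?left = "\<lambda>t. f ((2/3) *\<^sub>R x + t *\<^sub>R (2 *\<^sub>R y), z + t *\<^sub>R br ((2/3) *\<^sub>R x) (2 *\<^sub>R y))"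
  have "f (x + t *\<^sub>R y, z) = (1/4) * ?right t + (3/4) * ?left t + 0" for t
  proof -
    define p w where "p = x + t *\<^sub>R y" and "w = x - (3 * t) *\<^sub>R y"
    have pw: "br p w = (-4 * t) *\<^sub>R br x y"
      using br_antisym[of y x] unfolding p_def w_def
      by (simp add: br_linear_simps algebra_simps) (simp flip: scaleR_add_left)
    have "(p + 0 *\<^sub>R w, z + 0 *\<^sub>R br p w) = (x + t *\<^sub>R y, z)"
      and "(p + 1 *\<^sub>R w, z + 1 *\<^sub>R br p w) = (2 *\<^sub>R x + t *\<^sub>R (-2 *\<^sub>R y), z + t *\<^sub>R br (2 *\<^sub>R x) (-2 *\<^sub>R y))"
      and "(p + (-1/3) *\<^sub>R w, z + (-1/3) *\<^sub>R br p w) =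
        ((2/3) *\<^sub>R x + t *\<^sub>R (2 *\<^sub>R y), z + t *\<^sub>R br ((2/3) *\<^sub>R x) (2 *\<^sub>R y))"
      unfolding pw by (simp_all add: p_def w_def euclidean_eq_iff[where 'a='a]
          br_linear_simps algebra_simps)
    moreover have "real_affine (\<lambda>s. f (p + s *\<^sub>R w, z + s *\<^sub>R br p w))"
      by (rule h_affine_horizontal_line[OF f])
    note real_affine_eq[OF this, of "-1/3"]
    ultimately have "?left t = f (x + t *\<^sub>R y, z) + (?right t - f (x + t *\<^sub>R y, z)) * (-1/3)"
      by (simp only:)
    then show ?thesis
      by (simp add: field_simps)
  qed
  then show ?thesis
    using real_affine_lincomb[OF h_affine_horizontal_line h_affine_horizontal_line, OF f f] by (simp only:)
qed

lemma affine_fun_imp_h_affine: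
  assumes "affine_fun g"
  shows "h_affine br g"
proof -
  obtain c L where L: "linear L" and g: "\<And>p. g p = c + L p"
    using assms unfolding affine_fun_def by blast
  have step: "carnot_mult br p (t *\<^sub>R y, 0) = p + t *\<^sub>R (y, br (fst p) y)" for p t y
    by (cases p) (simp add: carnot_mult_def br_linear_simps)
  have "g (carnot_mult br p (t *\<^sub>R y, 0)) = (c + L p) + L (y, br (fst p) y) * t" for p t y
    by (simp only: g step linear_add[OF L] linear_scale[OF L]) simp
  then show ?thesis
    unfolding h_affine_def by blast
qed

lemma h_affine_bracket_annihilator:
  assumes "bracket_annihilator br \<Phi>"
  shows "h_affine br (\<lambda>p. \<Phi> (fst p) (snd p))"
proof -
  have \<Phi>: "bilinear \<Phi>" and ann: "\<And>x y. \<Phi> y (br x y) = 0"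
    using assms unfolding bracket_annihilator_def by auto
  have "\<Phi> (fst (carnot_mult br p (t *\<^sub>R y, 0))) (snd (carnot_mult br p (t *\<^sub>R y, 0)))
      = \<Phi> (fst p) (snd p) + (\<Phi> y (snd p) + \<Phi> (fst p) (br (fst p) y)) * t" for p y t
    by (simp add: ann carnot_mult_def bilinear_ladd[OF \<Phi>] bilinear_radd[OF \<Phi>]
        bilinear_lmul[OF \<Phi>] bilinear_rmul[OF \<Phi>] br_linear_simps algebra_simps)
  then show ?thesis
    unfolding h_affine_def by blast
qed

lemma vertical_bracket_step:
  assumes "h_affine br g"
  shows "g (x, w + c *\<^sub>R br u v) = g (x, w) + c * vdiff (br u v) g (x, w)"
  using real_affine_eq[OF h_affine_vertical_line[OF assms, where x=x and z=w and u=u and v=v], of c]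
  by (simp add: vdiff_def)

lemma vdiff_vdiff_bracket:
  assumes "h_affine br g"
  shows "vdiff (br u v) (vdiff (br u v) g) = (\<lambda>p. 0)"
proof
  fix p :: "'a \<times> 'b"
  have "br u v + br u v = 2 *\<^sub>R br u v"
    by (simp add: scaleR_2)
  then show "vdiff (br u v) (vdiff (br u v) g) p = 0"
    using vertical_bracket_step[OF assms, of "fst p" "snd p" 2 u v] by (simp add: vdiff_def add.assoc)
qed

lemma fold_vdiff_not_distinct:
  assumes g: "h_affine br g" and L: "set L \<subseteq> {br u v | u v. True}" "\<not> distinct L"
  shows "fold vdiff L g = (\<lambda>p. 0)"
proof -
  obtain xs \<zeta> ys zs where L_eq: "L = xs @ [\<zeta>] @ ys @ [\<zeta>] @ zs"
    using not_distinct_decomp[OF L(2)] by blast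
  then obtain u v where \<zeta>: "\<zeta> = br u v"
    using L(1) by auto
  let ?g = "fold vdiff xs g"
  have "fold vdiff L g = fold vdiff zs (vdiff \<zeta> (fold vdiff ys (vdiff \<zeta> ?g)))"
    by (simp add: L_eq)
  also have "\<dots> = fold vdiff zs (fold vdiff ys (vdiff \<zeta> (vdiff \<zeta> ?g)))"
    by (simp add: fold_vdiff_commute)
  also have "\<dots> = (\<lambda>p. 0)"
    using vdiff_vdiff_bracket[OF h_affine_fold_vdiff[OF g]] by (simp add: \<zeta> fold_vdiff_zero)
  finally show ?thesis .
qed

lemma quadratic_expansion_extend:
  fixes g :: "'a \<times> 'b \<Rightarrow> real" and P :: "'b \<Rightarrow> 'b"
  assumes g: "h_affine br g" and diff: "affine_fun (vdiff (br u v) g)"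
    and \<kappa>: "linear \<kappa>" and P: "linear P"
    and L: "linear L" and \<Phi>: "bilinear \<Phi>" and Q: "bilinear Q"
    and exp: "\<And>x z. g (x, P z) = c + L (x, z) + \<Phi> x z + Q z z"
  obtains L' \<Phi>' Q' where "linear L'" "bilinear \<Phi>'" "bilinear Q'"
    "\<And>x z. g (x, P z + \<kappa> z *\<^sub>R br u v) = c + L' (x, z) + \<Phi>' x z + Q' z z"
proof -
  obtain e M where M: "linear M" and dM: "\<And>p. vdiff (br u v) g p = e + M p"
    using diff unfolding affine_fun_def by blast
  have M_split: "M (x, z) = M (x, 0) + M (0, z)" for x z
    using linear_add[OF M, of "(x, 0)" "(0, z)"] by simp
  note M_simps = linear_add[OF M, of "(_, 0)" "(_, 0)", simplified]
    linear_add[OF M, of "(0, _)" "(0, _)", simplified]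
    linear_scale[OF M, of _ "(_, 0)", simplified] linear_scale[OF M, of _ "(0, _)", simplified]
  note \<kappa>_simps = linear_add[OF \<kappa>] linear_scale[OF \<kappa>]
  show thesis
  proof (rule that)
    show "linear (\<lambda>p. L p + \<kappa> (snd p) * e)"
      by (rule linearI) (simp_all add: linear_add[OF L] linear_scale[OF L] \<kappa>_simps algebra_simps)
    show "bilinear (\<lambda>x z. \<Phi> x z + \<kappa> z * M (x, 0))"
      by (rule bilinearI) (simp_all add: bilinear_ladd[OF \<Phi>] bilinear_radd[OF \<Phi>]
          bilinear_lmul[OF \<Phi>] bilinear_rmul[OF \<Phi>] M_simps \<kappa>_simps algebra_simps)
    show "bilinear (\<lambda>z w. Q z w + \<kappa> z * M (0, P w))"
      by (rule bilinearI) (simp_all add: bilinear_ladd[OF Q] bilinear_radd[OF Q] bilinear_lmul[OF Q]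
          bilinear_rmul[OF Q] linear_add[OF P] linear_scale[OF P] M_simps \<kappa>_simps algebra_simps)
    show "g (x, P z + \<kappa> z *\<^sub>R br u v) = c + (L (x, z) + \<kappa> (snd (x, z)) * e)
        + (\<Phi> x z + \<kappa> z * M (x, 0)) + (Q z z + \<kappa> z * M (0, P z))" for x z
      using vertical_bracket_step[OF g, of x "P z" "\<kappa> z" u v]
      by (simp add: exp dM M_split[of x "P z"] algebra_simps)
  qed
qed

lemma quadratic_expansion_on_subset:
  fixes g :: "'a \<times> 'b \<Rightarrow> real"
  assumes g: "h_affine br g"
    and B: "independent B" "span B = UNIV" "B \<subseteq> {br u v | u v. True}"
    and diff: "\<And>\<zeta>. \<zeta> \<in> B \<Longrightarrow> affine_fun (vdiff \<zeta> g)"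
    and "F \<subseteq> B"
  shows "\<exists>L \<Phi> (Q::'b \<Rightarrow> 'b \<Rightarrow> real) c. linear L \<and> bilinear \<Phi> \<and> bilinear Q \<and>
    (\<forall>x z. g (x, \<Sum>\<zeta>\<in>F. representation B z \<zeta> *\<^sub>R \<zeta>) = c + L (x, z) + \<Phi> x z + Q z z)"
  using finite_subset[OF \<open>F \<subseteq> B\<close> independent_imp_finite[OF B(1)]] \<open>F \<subseteq> B\<close>
proof (induction F rule: finite_induct)
  case empty
  obtain c L where "linear L" "\<And>x. g (x, 0) = c + L x"
    using affine_funI_lines[OF h_affine_line_in_first_factor[OF g]] unfolding affine_fun_def by blast
  moreover have "linear (\<lambda>p. L (fst p))" if "linear L"
    using that by (auto intro!: linearI simp: linear_add linear_scale)
  ultimately show ?case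
    by (intro exI[of _ "\<lambda>p. L (fst p)"] exI[of _ "\<lambda>x z. 0::real"] exI[of _ c]) (simp add: bilinear_zero)
next
  case (insert \<zeta> F)
  define coord where "coord z = representation B z \<zeta>" for z
  define proj where "proj z = (\<Sum>\<zeta>\<in>F. representation B z \<zeta> *\<^sub>R \<zeta>)" for z
  have coord: "linear coord" and proj: "linear proj"
    by (auto intro!: linearI simp: coord_def proj_def B real_vector.representation_add
        real_vector.representation_scale scaleR_add_left sum.distrib scaleR_sum_right)
  obtain L \<Phi> Q c where L: "linear L" "bilinear \<Phi>" "bilinear Q"
    and exp: "\<And>x z. g (x, proj z) = c + L (x, z) + \<Phi> x z + Q z z"
    using insert unfolding proj_def by blast
  obtain u v where \<zeta>: "\<zeta> = br u v"
    using insert.prems B(3) by blast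
  then have "affine_fun (vdiff (br u v) g)"
    using diff insert.prems by blast
  from quadratic_expansion_extend[OF g this coord proj L exp]
  obtain L' \<Phi>' Q' where L': "linear L'" "bilinear \<Phi>'" "bilinear Q'"
    and exp': "\<And>x z. g (x, proj z + coord z *\<^sub>R br u v) = c + L' (x, z) + \<Phi>' x z + Q' z z"
    by blast
  have "(\<Sum>\<zeta>'\<in>insert \<zeta> F. representation B z \<zeta>' *\<^sub>R \<zeta>') = proj z + coord z *\<^sub>R br u v" for z
    using insert.hyps by (simp add: proj_def coord_def \<zeta> add.commute)
  then show ?case
    using L' exp' by (intro exI[of _ L'] exI[of _ \<Phi>'] exI[of _ Q'] exI[of _ c]) simp
qed

lemma h_affine_quadratic_expansion:
  fixes g :: "'a \<times> 'b \<Rightarrow> real"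
  assumes g: "h_affine br g"
    and B: "independent B" "span B = UNIV" "B \<subseteq> {br u v | u v. True}"
    and diff: "\<And>\<zeta>. \<zeta> \<in> B \<Longrightarrow> affine_fun (vdiff \<zeta> g)"
  obtains L \<Phi> Q c where "linear L" "bilinear \<Phi>" "bilinear Q"
    "\<And>x z. g (x, z) = c + L (x, z) + \<Phi> x z + Q z z"
proof -
  have "(\<Sum>\<zeta>\<in>B. representation B z \<zeta> *\<^sub>R \<zeta>) = z" for z
    using real_vector.sum_representation_eq[OF B(1) _ independent_imp_finite[OF B(1)] order_refl] B(2)
    by simp
  moreover obtain L \<Phi> Q c where "linear L" "bilinear \<Phi>" "bilinear Q"
    and "\<forall>x z. g (x, \<Sum>\<zeta>\<in>B. representation B z \<zeta> *\<^sub>R \<zeta>) = c + L (x, z) + \<Phi> x z + Q z z"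
    using quadratic_expansion_on_subset[OF g B diff order_refl] by blast
  ultimately show thesis
    using that by simp
qed

lemma h_affine_quadratic_coefficients:
  fixes g :: "'a \<times> 'b \<Rightarrow> real"
  assumes g: "h_affine br g" and L: "linear L" and \<Phi>: "bilinear \<Phi>" and Q: "bilinear Q"
    and exp: "\<And>x z. g (x, z) = c + L (x, z) + \<Phi> x z + Q z z"
  shows "\<Phi> y (br x y) = 0" and "Q (br x y) (br x y) = 0"
proof -
  have quad: "\<Phi> y (br x y) + Q (br x y) (br x y) = 0" for x y
  proof -
    define w where "w = br x y"
    have "g (x + t *\<^sub>R y, 0 + t *\<^sub>R w) =
        (c + L (x, 0)) + (L (y, w) + \<Phi> x w) * t + (\<Phi> y w + Q w w) * t\<^sup>2" for t
      using linear_add[OF L, of "(x, 0)" "t *\<^sub>R (y, w)"] linear_scale[OF L, of t "(y, w)"]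
      by (simp add: exp bilinear_ladd[OF \<Phi>] bilinear_radd[OF \<Phi>] bilinear_lmul[OF \<Phi>] bilinear_rzero[OF \<Phi>]
          bilinear_rmul[OF \<Phi>] bilinear_lmul[OF Q] bilinear_rmul[OF Q] power2_eq_square algebra_simps)
    then show ?thesis
      using h_affine_horizontal_line[OF g, of x y 0] real_affine_quadratic_coeff unfolding w_def
      by (metis (no_types, lifting) ext)
  qed
  have "\<Phi> y (br (2 *\<^sub>R x) y) + Q (br (2 *\<^sub>R x) y) (br (2 *\<^sub>R x) y) = 0"
    by (rule quad)
  then have "2 * \<Phi> y (br x y) + 4 * Q (br x y) (br x y) = 0"
    by (simp add: br_linear_simps bilinear_rmul[OF \<Phi>] bilinear_lmul[OF Q] bilinear_rmul[OF Q])
  then show "\<Phi> y (br x y) = 0" and "Q (br x y) (br x y) = 0"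
    using quad[where x=x and y=y] by linarith+
qed

text \<open>The polarisation \<open>(y, w) \<mapsto> Q w [x\<^sub>0, y] + Q [x\<^sub>0, y] w\<close> is a bracket annihilator, so the
  symmetric part of \<open>Q\<close> vanishes against brackets, hence everywhere.\<close>

lemma bilinear_diagonal_zero:
  fixes Q :: "'b \<Rightarrow> 'b \<Rightarrow> real"
  assumes no_annihilator: "\<And>\<Phi>. bracket_annihilator br \<Phi> \<Longrightarrow> \<Phi> = (\<lambda>x z. 0)"
    and Q: "bilinear Q" and diag: "\<And>x y. Q (br x y) (br x y) = 0"
  shows "Q w w = 0"
proof -
  have sym: "Q w (br x\<^sub>0 y) + Q (br x\<^sub>0 y) w = 0" for x\<^sub>0 y w
  proof -
    have "bracket_annihilator br (\<lambda>y w. Q w (br x\<^sub>0 y) + Q (br x\<^sub>0 y) w)"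
      unfolding bracket_annihilator_def
    proof (intro conjI allI)
      show "bilinear (\<lambda>y w. Q w (br x\<^sub>0 y) + Q (br x\<^sub>0 y) w)"
        by (rule bilinearI) (simp_all add: bilinear_ladd[OF Q] bilinear_radd[OF Q]
            bilinear_lmul[OF Q] bilinear_rmul[OF Q] br_linear_simps algebra_simps)
      fix x y
      show "Q (br x y) (br x\<^sub>0 y) + Q (br x\<^sub>0 y) (br x y) = 0"
        using diag[of "x + x\<^sub>0" y] diag[of x y] diag[of x\<^sub>0 y]
        by (simp add: br_linear_simps bilinear_ladd[OF Q] bilinear_radd[OF Q])
    qed
    then show ?thesis
      using no_annihilator by (metis (no_types, lifting))
  qed
  have "linear (\<lambda>v. Q w v + Q v w)"
    by (rule linearI) (simp_all add: bilinear_ladd[OF Q] bilinear_radd[OF Q]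
        bilinear_lmul[OF Q] bilinear_rmul[OF Q] algebra_simps)
  then have "Q w w + Q w w = 0"
    by (rule real_vector.linear_eq_0_on_span[of _ "{br u v | u v. True}"]) (use sym span_brackets in auto)
  then show ?thesis
    by simp
qed

lemma affine_fun_if_vdiffs_affine:
  fixes g :: "'a \<times> 'b \<Rightarrow> real"
  assumes no_annihilator: "\<And>\<Phi>. bracket_annihilator br \<Phi> \<Longrightarrow> \<Phi> = (\<lambda>x z. 0)"
    and g: "h_affine br g"
    and B: "independent B" "span B = UNIV" "B \<subseteq> {br u v | u v. True}"
    and diff: "\<And>\<zeta>. \<zeta> \<in> B \<Longrightarrow> affine_fun (vdiff \<zeta> g)"
  shows "affine_fun g"
proof (rule h_affine_quadratic_expansion[OF g B])
  show "\<zeta> \<in> B \<Longrightarrow> affine_fun (vdiff \<zeta> g)" for \<zeta>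
    by (rule diff)
  fix L \<Phi> Q c
  assume L: "linear L" and \<Phi>: "bilinear \<Phi>" and Q: "bilinear Q"
    and exp: "\<And>x z. g (x, z) = c + L (x, z) + \<Phi> x z + Q z z"
  note coeffs = h_affine_quadratic_coefficients[OF g L \<Phi> Q exp]
  have "\<Phi> = (\<lambda>x z. 0)"
    by (rule no_annihilator) (simp add: bracket_annihilator_def \<Phi> coeffs(1))
  moreover have "Q z z = 0" for z
    using bilinear_diagonal_zero[OF no_annihilator Q coeffs(2)] .
  ultimately have "g p = c + L p" for p
    using exp[of "fst p" "snd p"] by simp
  then show ?thesis
    using L unfolding affine_fun_def by blast
qed

theorem h_affine_imp_affine_fun:
  assumes no_annihilator: "\<And>\<Phi>. bracket_annihilator br \<Phi> \<Longrightarrow> \<Phi> = (\<lambda>x z. 0)"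
    and f: "h_affine br f"
  shows "affine_fun f"
proof -
  obtain B where B: "B \<subseteq> {br u v | u v. True}" "independent B" "{br u v | u v. True} \<subseteq> span B"
    using real_vector.maximal_independent_subset by blast
  then have span_B: "span B = UNIV"
    using real_vector.span_mono[OF B(3)] span_brackets real_vector.span_span[of B] by auto
  have "affine_fun (fold vdiff L f)" if "set L \<subseteq> B" "card B < length L + m" for L m
    using that
  proof (induction m arbitrary: L)
    case 0
    then have "\<not> distinct L"
      using card_mono[OF independent_imp_finite[OF B(2)] 0(1)] distinct_card by fastforce
    then have "fold vdiff L f = (\<lambda>p. 0)"
      using fold_vdiff_not_distinct[OF f] 0(1) B(1) by blast
    then show ?case
      unfolding affine_fun_def by (intro exI[of _ 0] exI[of _ "\<lambda>p. 0"]) (simp add: linear_zero)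
  next
    case (Suc m)
    show ?case
    proof (rule affine_fun_if_vdiffs_affine[OF no_annihilator h_affine_fold_vdiff[OF f] B(2) span_B B(1)])
      fix \<zeta> assume "\<zeta> \<in> B"
      then show "affine_fun (vdiff \<zeta> (fold vdiff L f))"
        using Suc.IH[of "L @ [\<zeta>]"] Suc.prems by simp
    qed
  qed
  from this[of "[]" "Suc (card B)"] show ?thesis
    by simp
qed

theorem h_affine_eq_affine_iff:
  "{f. h_affine br f} = {f :: 'a \<times> 'b \<Rightarrow> real. affine_fun f}
    \<longleftrightarrow> (\<forall>\<Phi>. bracket_annihilator br \<Phi> \<longrightarrow> \<Phi> = (\<lambda>x z. 0))"
proof
  assume "{f. h_affine br f} = {f :: 'a \<times> 'b \<Rightarrow> real. affine_fun f}"
  then show "\<forall>\<Phi>. bracket_annihilator br \<Phi> \<longrightarrow> \<Phi> = (\<lambda>x z. 0)"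
    using h_affine_bracket_annihilator bilinear_affine_fun_eq_zero
    unfolding bracket_annihilator_def by blast
next
  assume "\<forall>\<Phi>. bracket_annihilator br \<Phi> \<longrightarrow> \<Phi> = (\<lambda>x z. 0)"
  then show "{f. h_affine br f} = {f :: 'a \<times> 'b \<Rightarrow> real. affine_fun f}"
    using h_affine_imp_affine_fun affine_fun_imp_h_affine by blast
qed

end

section \<open>Exterior algebra in coordinates\<close>

definition inversions :: "nat set \<Rightarrow> nat set \<Rightarrow> (nat \<times> nat) set" where
  "inversions I J = {(i, j). i \<in> I \<and> j \<in> J \<and> j < i}"

lemma wsign_inversions: "wsign I J = (-1) ^ card (inversions I J)"
  by (simp add: wsign_def inversions_def)

lemma finite_inversions: "finite I \<Longrightarrow> finite J \<Longrightarrow> finite (inversions I J)"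
  by (rule finite_subset[of _ "I \<times> J"]) (auto simp: inversions_def)

lemma card_inversions_Un_left:
  assumes "finite A" "finite B" "finite C" "A \<inter> B = {}"
  shows "card (inversions (A \<union> B) C) = card (inversions A C) + card (inversions B C)"
proof -
  have "inversions (A \<union> B) C = inversions A C \<union> inversions B C"
    by (auto simp: inversions_def)
  moreover have "inversions A C \<inter> inversions B C = {}"
    using assms(4) by (auto simp: inversions_def)
  ultimately show ?thesis
    using assms by (simp add: card_Un_disjoint finite_inversions)
qed

lemma card_inversions_Un_right:
  assumes "finite A" "finite B" "finite C" "B \<inter> C = {}"
  shows "card (inversions A (B \<union> C)) = card (inversions A B) + card (inversions A C)"
proof -
  have "inversions A (B \<union> C) = inversions A B \<union> inversions A C"
    by (auto simp: inversions_def)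
  moreover have "inversions A B \<inter> inversions A C = {}"
    using assms(4) by (auto simp: inversions_def)
  ultimately show ?thesis
    using assms by (simp add: card_Un_disjoint finite_inversions)
qed

lemma card_inversions_swap:
  assumes "finite A" "finite B" "A \<inter> B = {}"
  shows "card (inversions A B) + card (inversions B A) = card A * card B"
proof -
  have "A \<times> B = inversions A B \<union> prod.swap ` inversions B A"
    using assms(3) by (auto simp: inversions_def linorder_neq_iff)
  moreover have "inversions A B \<inter> prod.swap ` inversions B A = {}"
    by (auto simp: inversions_def)
  ultimately have "card A * card B = card (inversions A B) + card (prod.swap ` inversions B A)"
    using assms by (metis card_Un_disjoint card_cartesian_product finite_imageI finite_inversions)
  then show ?thesis
    by (simp add: card_image swap_inj_on)
qed

lemma wsign_Un_left:
  "finite A \<Longrightarrow> finite B \<Longrightarrow> finite C \<Longrightarrow> A \<inter> B = {} \<Longrightarrow> wsign (A \<union> B) C = wsign A C * wsign B C"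
  by (simp add: wsign_inversions card_inversions_Un_left power_add)

lemma wsign_Un_right:
  "finite A \<Longrightarrow> finite B \<Longrightarrow> finite C \<Longrightarrow> B \<inter> C = {} \<Longrightarrow> wsign A (B \<union> C) = wsign A B * wsign A C"
  by (simp add: wsign_inversions card_inversions_Un_right power_add)

lemma wsign_square: "wsign A B * wsign A B = 1"
  by (simp add: wsign_inversions flip: power_add)

lemma wsign_nonzero: "wsign A B \<noteq> 0"
  by (simp add: wsign_inversions)

lemma wsign_swap:
  assumes "finite A" "finite B" "A \<inter> B = {}"
  shows "wsign A B = (-1) ^ (card A * card B) * wsign B A"
proof -
  have "wsign A B * wsign B A = (-1) ^ (card A * card B)"
    using card_inversions_swap[OF assms] by (simp add: wsign_inversions flip: power_add)
  then show ?thesis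
    by (metis mult.assoc mult.right_neutral wsign_square)
qed

lemma wsign_singleton: "wsign {i} D = (-1) ^ card {d \<in> D. d < i}"
proof -
  have "inversions {i} D = Pair i ` {d \<in> D. d < i}"
    by (auto simp: inversions_def)
  then show ?thesis
    by (simp add: wsign_inversions card_image inj_on_def)
qed

definition basis_form :: "nat set \<Rightarrow> form" where
  "basis_form A = (\<lambda>S. if S = A then 1 else 0)"

definition ksubsets :: "nat \<Rightarrow> nat \<Rightarrow> nat set set" where
  "ksubsets n k = {D. D \<subseteq> {..<n} \<and> card D = k}"

lemma finite_ksubsets: "finite (ksubsets n k)"
  unfolding ksubsets_def by (rule finite_subset[of _ "Pow {..<n}"]) auto

lemma ksubsets_one: "A \<in> ksubsets n 1 \<longleftrightarrow> (\<exists>i<n. A = {i})"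
  by (auto simp: ksubsets_def card_1_singleton_iff)

lemma ksubsets_two: "D \<in> ksubsets n 2 \<longleftrightarrow> (\<exists>j k. j < k \<and> k < n \<and> D = {j, k})"
proof
  assume "D \<in> ksubsets n 2"
  then obtain j k where D: "D = {j, k}" "j \<noteq> k" "D \<subseteq> {..<n}"
    by (auto simp: ksubsets_def card_2_iff)
  show "\<exists>j k. j < k \<and> k < n \<and> D = {j, k}"
  proof (cases "j < k")
    case True
    then show ?thesis
      using D by auto
  next
    case False
    then have "k < j" "D = {k, j}"
      using D(1,2) by auto
    then show ?thesis
      using D(3) by blast
  qed
qed (auto simp: ksubsets_def)

lemma zero_form_apply [simp]: "zero_form S = 0"
  by (simp add: zero_form_def)

lemma lambda_zero_eq_zero_form: "(\<lambda>S. 0) = zero_form"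
  by (simp add: zero_form_def)

lemma zero_form_in_Lam: "zero_form \<in> Lam n k"
  unfolding Lam_def by simp

lemma Lam_add: "f \<in> Lam n k \<Longrightarrow> g \<in> Lam n k \<Longrightarrow> (\<lambda>S. f S + g S) \<in> Lam n k"
  unfolding Lam_def by (smt (verit) mem_Collect_eq)

lemma Lam_scale: "f \<in> Lam n k \<Longrightarrow> (\<lambda>S. c * f S) \<in> Lam n k"
  unfolding Lam_def by auto

lemma Lam_diff: "f \<in> Lam n k \<Longrightarrow> g \<in> Lam n k \<Longrightarrow> (\<lambda>S. f S - g S) \<in> Lam n k"
  unfolding Lam_def by (smt (verit) mem_Collect_eq)

lemma Lam_sum:
  assumes "\<And>i. i \<in> I \<Longrightarrow> F i \<in> Lam n k"
  shows "(\<lambda>S. \<Sum>i\<in>I. c i * F i S) \<in> Lam n k"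
  unfolding Lam_def
proof (intro CollectI allI impI)
  fix S assume "(\<Sum>i\<in>I. c i * F i S) \<noteq> 0"
  then obtain i where "i \<in> I" "c i * F i S \<noteq> 0"
    by (meson sum.not_neutral_contains_not_neutral)
  then show "S \<subseteq> {..<n} \<and> card S = k"
    using assms unfolding Lam_def by auto
qed

lemma basis_form_in_Lam: "D \<in> ksubsets n k \<Longrightarrow> basis_form D \<in> Lam n k"
  unfolding Lam_def basis_form_def ksubsets_def by auto

lemma Lam_expansion:
  assumes "f \<in> Lam n k"
  shows "f = (\<lambda>S. \<Sum>D\<in>ksubsets n k. f D * basis_form D S)"
proof
  fix S
  have "(\<Sum>D\<in>ksubsets n k. f D * basis_form D S) = (if S \<in> ksubsets n k then f S else 0)"
    by (simp add: basis_form_def finite_ksubsets if_distrib if_distribR cong: if_cong)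
  also have "\<dots> = f S"
    using assms unfolding Lam_def ksubsets_def by auto
  finally show "f S = (\<Sum>D\<in>ksubsets n k. f D * basis_form D S)" ..
qed

lemma form_eq_zero_iff: "\<eta> = zero_form \<longleftrightarrow> (\<forall>S. \<eta> S = 0)"
  by (auto simp: zero_form_def)

lemma wedge_infinite: "infinite K \<Longrightarrow> wedge f g K = 0"
  unfolding wedge_def by simp

lemma wedge_add_left: "wedge (\<lambda>S. f S + g S) h = (\<lambda>K. wedge f h K + wedge g h K)"
  unfolding wedge_def by (simp add: algebra_simps sum.distrib)

lemma wedge_add_right: "wedge h (\<lambda>S. f S + g S) = (\<lambda>K. wedge h f K + wedge h g K)"
  unfolding wedge_def by (simp add: algebra_simps sum.distrib)

lemma wedge_scale_left: "wedge (\<lambda>S. c * f S) h = (\<lambda>K. c * wedge f h K)"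
  unfolding wedge_def by (simp add: sum_distrib_left algebra_simps)

lemma wedge_scale_right: "wedge h (\<lambda>S. c * f S) = (\<lambda>K. c * wedge h f K)"
  unfolding wedge_def by (simp add: sum_distrib_left algebra_simps)

lemma wedge_diff_left: "wedge (\<lambda>S. f S - g S) h = (\<lambda>K. wedge f h K - wedge g h K)"
  unfolding wedge_def by (simp add: algebra_simps sum_subtractf)

lemma wedge_sum_left:
  "wedge (\<lambda>S. \<Sum>i\<in>I. c i * F i S) h = (\<lambda>K. \<Sum>i\<in>I. c i * wedge (F i) h K)"
  unfolding wedge_def
  by (simp add: sum_distrib_left sum_distrib_right sum.swap[of _ I] algebra_simps)

lemma wedge_sum_right:
  "wedge h (\<lambda>S. \<Sum>i\<in>I. c i * F i S) = (\<lambda>K. \<Sum>i\<in>I. c i * wedge h (F i) K)"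
  unfolding wedge_def
  by (simp add: sum_distrib_left sum_distrib_right sum.swap[of _ I] algebra_simps)

lemma wedge_zero_left [simp]: "wedge zero_form h = zero_form"
  unfolding wedge_def zero_form_def by simp

lemma wedge_zero_right [simp]: "wedge h zero_form = zero_form"
  unfolding wedge_def zero_form_def by simp

lemma wedge_basis_form_left:
  "finite K \<Longrightarrow> wedge (basis_form A) g K = (if A \<subseteq> K then wsign A (K - A) * g (K - A) else 0)"
  unfolding wedge_def basis_form_def by (simp add: if_distrib if_distribR cong: if_cong)

lemma wsign_nested:
  assumes "finite K" "I \<subseteq> J" "J \<subseteq> K"
  shows "wsign J (K - J) * wsign I (J - I) = wsign I (K - I) * wsign (J - I) (K - J)"
proof -
  have fin: "finite I" "finite J" "finite (J - I)" "finite (K - J)"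
    using assms by (auto intro: finite_subset)
  have "J = I \<union> (J - I)" "K - I = (J - I) \<union> (K - J)" "(J - I) \<inter> (K - J) = {}"
    using assms by auto
  then have "wsign J (K - J) = wsign I (K - J) * wsign (J - I) (K - J)"
    and "wsign I (K - I) = wsign I (J - I) * wsign I (K - J)"
    using wsign_Un_left[of I "J - I" "K - J"] wsign_Un_right[of I "J - I" "K - J"] fin
    by (metis Diff_disjoint, metis)
  then show ?thesis
    by simp
qed

lemma wedge_assoc: "wedge (wedge f g) h = wedge f (wedge g h)"
proof
  fix K
  show "wedge (wedge f g) h K = wedge f (wedge g h) K"
  proof (cases "finite K")
    case False
    then show ?thesis by (simp add: wedge_infinite)
  next
    case fin: True
    let ?t = "\<lambda>I J'. wsign I (K - I) * f I * (wsign J' (K - I - J') * g J' * h (K - I - J'))"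
    have "wedge (wedge f g) h K =
      (\<Sum>(J, I)\<in>Sigma (Pow K) Pow. wsign J (K - J) * wsign I (J - I) * f I * g (J - I) * h (K - J))"
      unfolding wedge_def using fin
      by (simp add: sum.Sigma[symmetric] finite_subset sum_distrib_left sum_distrib_right mult.assoc)
    also have "\<dots> = (\<Sum>(I, J')\<in>Sigma (Pow K) (\<lambda>I. Pow (K - I)). ?t I J')"
    proof (rule sum.reindex_bij_witness[where i = "\<lambda>(I, J'). (I \<union> J', I)" and j = "\<lambda>(J, I). (I, J - I)"])
      fix a assume "a \<in> Sigma (Pow K) Pow"
      moreover obtain J I where "a = (J, I)" by (cases a)
      moreover have "J \<subseteq> K \<Longrightarrow> I \<subseteq> J \<Longrightarrow> K - I - (J - I) = K - J"
        by auto
      ultimately show "(case case a of (J, I) \<Rightarrow> (I, J - I) of (I, J') \<Rightarrow> ?t I J') =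
          (case a of (J, I) \<Rightarrow> wsign J (K - J) * wsign I (J - I) * f I * g (J - I) * h (K - J))"
        using wsign_nested[OF fin, of I J] by auto
    qed auto
    also have "\<dots> = wedge f (wedge g h) K"
      unfolding wedge_def using fin by (simp add: sum.Sigma finite_subset sum_distrib_left)
    finally show ?thesis .
  qed
qed

lemma wedge_commute:
  assumes f: "f \<in> Lam n p" and g: "g \<in> Lam n q"
  shows "wedge f g = (\<lambda>K. (-1) ^ (p * q) * wedge g f K)"
proof
  fix K
  show "wedge f g K = (-1) ^ (p * q) * wedge g f K"
  proof (cases "finite K")
    case False
    then show ?thesis by (simp add: wedge_infinite)
  next
    case True
    have "wedge f g K = (\<Sum>J\<in>Pow K. wsign (K - J) J * f (K - J) * g J)"
      unfolding wedge_def
      by (rule sum.reindex_bij_witness[where i = "\<lambda>J. K - J" and j = "\<lambda>J. K - J"])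
        (auto simp: double_diff)
    also have "\<dots> = (\<Sum>J\<in>Pow K. (-1) ^ (p * q) * (wsign J (K - J) * g J * f (K - J)))"
    proof (rule sum.cong[OF refl])
      fix J assume J: "J \<in> Pow K"
      show "wsign (K - J) J * f (K - J) * g J = (-1) ^ (p * q) * (wsign J (K - J) * g J * f (K - J))"
      proof (cases "f (K - J) = 0 \<or> g J = 0")
        case False
        then have "card (K - J) = p" "card J = q"
          using f g unfolding Lam_def by auto
        then show ?thesis
          using wsign_swap[of "K - J" J] True J by (simp add: Int_commute finite_subset)
      qed auto
    qed
    also have "\<dots> = (-1) ^ (p * q) * wedge g f K"
      unfolding wedge_def by (simp add: sum_distrib_left)
    finally show ?thesis .
  qed
qed

lemma wedge_in_Lam:
  assumes f: "f \<in> Lam n p" and g: "g \<in> Lam n q"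
  shows "wedge f g \<in> Lam n (p + q)"
  unfolding Lam_def
proof (intro CollectI allI impI)
  fix S assume nz: "wedge f g S \<noteq> 0"
  then have "finite S"
    using wedge_infinite by blast
  from nz obtain I where I: "I \<subseteq> S" and "wsign I (S - I) * f I * g (S - I) \<noteq> 0"
    unfolding wedge_def by (meson PowD sum.not_neutral_contains_not_neutral)
  then have "I \<subseteq> {..<n}" "card I = p" "S - I \<subseteq> {..<n}" "card (S - I) = q"
    using f g unfolding Lam_def by auto
  then show "S \<subseteq> {..<n} \<and> card S = p + q"
    using I \<open>finite S\<close> by (metis Diff_partition card_Diff_subset card_mono finite_subset
        le_add_diff_inverse sup.boundedI)
qed

lemma wedge_Lam1_in_Lam2: "\<theta> \<in> Lam n 1 \<Longrightarrow> \<theta>' \<in> Lam n 1 \<Longrightarrow> wedge \<theta> \<theta>' \<in> Lam n 2"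
  using wedge_in_Lam[of \<theta> n 1 \<theta>' 1] by (simp add: numeral_2_eq_2)

lemma wedge_self_Lam1: "\<theta> \<in> Lam n 1 \<Longrightarrow> wedge \<theta> \<theta> = zero_form"
  using wedge_commute[of \<theta> n 1 \<theta> 1] by (auto simp: fun_eq_iff dest: fun_cong)

lemma wedge_basis_forms:
  assumes "finite A" "finite B"
  shows "wedge (basis_form A) (basis_form B) =
    (if A \<inter> B = {} then (\<lambda>K. wsign A B * basis_form (A \<union> B) K) else zero_form)"
proof
  fix K
  show "wedge (basis_form A) (basis_form B) K =
    (if A \<inter> B = {} then (\<lambda>K. wsign A B * basis_form (A \<union> B) K) else zero_form) K"
  proof (cases "finite K")
    case False
    then have "K \<noteq> A \<union> B"
      using assms by auto
    with False show ?thesis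
      by (simp add: wedge_infinite basis_form_def)
  next
    case True
    have "A \<subseteq> K \<and> K - A = B \<longleftrightarrow> A \<inter> B = {} \<and> K = A \<union> B"
      by blast
    then show ?thesis
      using wedge_basis_form_left[OF True, of A "basis_form B"]
      by (auto simp: basis_form_def Diff_triv)
  qed
qed

lemma wedge_expansion_left:
  "f \<in> Lam n p \<Longrightarrow> wedge f g = (\<lambda>K. \<Sum>A\<in>ksubsets n p. f A * wedge (basis_form A) g K)"
  by (subst Lam_expansion) (simp_all add: wedge_sum_left)

lemma wedge_expansion_right:
  "g \<in> Lam n q \<Longrightarrow> wedge f g = (\<lambda>K. \<Sum>B\<in>ksubsets n q. g B * wedge f (basis_form B) K)"
  by (subst Lam_expansion) (simp_all add: wedge_sum_right)

lemma form_eq_zero_by_top_pairing: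
  assumes mu: "\<mu> \<in> Lam n m"
    and pairing: "\<And>C. C \<in> ksubsets n (n - m) \<Longrightarrow> wedge (basis_form C) \<mu> {..<n} = 0"
  shows "\<mu> = zero_form"
proof (rule ccontr)
  assume "\<mu> \<noteq> zero_form"
  then obtain S where nz: "\<mu> S \<noteq> 0"
    by (auto simp: form_eq_zero_iff)
  then have S: "S \<subseteq> {..<n}" "card S = m"
    using mu unfolding Lam_def by auto
  define C where "C = {..<n} - S"
  have "C \<in> ksubsets n (n - m)" "{..<n} - C = S"
    using S by (auto simp: C_def ksubsets_def card_Diff_subset finite_subset)
  then have "wsign C S * \<mu> S = 0"
    using pairing wedge_basis_form_left[of "{..<n}" C \<mu>] by (simp add: ksubsets_def)
  then show False
    using nz wsign_nonzero by simp
qed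

definition complement_form :: "nat \<Rightarrow> nat \<Rightarrow> (nat set \<Rightarrow> real) \<Rightarrow> form" where
  "complement_form n k t =
    (\<lambda>J. if J \<in> ksubsets n (n - k) then wsign ({..<n} - J) J * t ({..<n} - J) else 0)"

lemma complement_form_in_Lam: "complement_form n k t \<in> Lam n (n - k)"
  unfolding Lam_def complement_form_def ksubsets_def by auto

lemma wedge_complement_form:
  assumes "C \<in> ksubsets n k"
  shows "wedge (basis_form C) (complement_form n k t) {..<n} = t C"
proof -
  have C: "C \<subseteq> {..<n}" "card C = k"
    using assms by (auto simp: ksubsets_def)
  then have "{..<n} - C \<in> ksubsets n (n - k)" "{..<n} - ({..<n} - C) = C"
    by (auto simp: ksubsets_def card_Diff_subset finite_subset)
  then show ?thesis
    using C wedge_basis_form_left[of "{..<n}" C] wsign_square[of C "{..<n} - C"]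
    by (simp add: complement_form_def mult.assoc[symmetric])
qed

lemma lin_on_add: "lin_on (Lam n k) L \<Longrightarrow> f \<in> Lam n k \<Longrightarrow> g \<in> Lam n k \<Longrightarrow> L (\<lambda>S. f S + g S) = L f + L g"
  unfolding lin_on_def by blast

lemma lin_on_scale: "lin_on (Lam n k) L \<Longrightarrow> f \<in> Lam n k \<Longrightarrow> L (\<lambda>S. c * f S) = c *\<^sub>R L f"
  unfolding lin_on_def by blast

lemma lin_on_zero: "lin_on (Lam n k) L \<Longrightarrow> L zero_form = 0"
  using lin_on_scale[of n k L zero_form 0] by (simp add: zero_form_in_Lam lambda_zero_eq_zero_form)

lemma lin_on_diff:
  assumes "lin_on (Lam n k) L" "f \<in> Lam n k" "g \<in> Lam n k"
  shows "L (\<lambda>S. f S - g S) = L f - L g"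
  using lin_on_add[OF assms(1,2) Lam_scale[OF assms(3), of "-1"]] lin_on_scale[OF assms(1,3), of "-1"]
  by simp

lemma lin_on_sum:
  assumes L: "lin_on (Lam n k) L" and "finite I" and "\<And>i. i \<in> I \<Longrightarrow> F i \<in> Lam n k"
  shows "L (\<lambda>S. \<Sum>i\<in>I. c i * F i S) = (\<Sum>i\<in>I. c i *\<^sub>R L (F i))"
  using assms(2,3)
proof (induction I rule: finite_induct)
  case empty
  then show ?case using lin_on_zero[OF L] by (simp add: lambda_zero_eq_zero_form)
next
  case (insert a I)
  then show ?case
    by (simp add: lin_on_add[OF L] lin_on_scale[OF L] Lam_scale Lam_sum)
qed

lemma lin_on_expansion:
  assumes "lin_on (Lam n k) L" "f \<in> Lam n k"
  shows "L f = (\<Sum>D\<in>ksubsets n k. f D *\<^sub>R L (basis_form D))"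
  by (subst Lam_expansion[OF assms(2)]) (rule lin_on_sum[OF assms(1) finite_ksubsets basis_form_in_Lam])

lemma lin_on_coefficient_sum:
  fixes v :: "nat set \<Rightarrow> 'v::real_vector"
  shows "lin_on (Lam n k) (\<lambda>f. \<Sum>D\<in>A. f D *\<^sub>R v D)"
  unfolding lin_on_def by (simp add: scaleR_add_left sum.distrib scaleR_sum_right)

lemma subspace_lin_on_image:
  assumes L: "lin_on (Lam n k) L"
  shows "subspace (L ` Lam n k)"
  unfolding subspace_def
proof (intro conjI ballI allI)
  show "0 \<in> L ` Lam n k"
    using rev_image_eqI[of zero_form _ 0 L, OF zero_form_in_Lam lin_on_zero[OF L, symmetric]] .
next
  fix x y assume "x \<in> L ` Lam n k" "y \<in> L ` Lam n k"
  then obtain f g where fg: "f \<in> Lam n k" "g \<in> Lam n k" and "x = L f" "y = L g"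
    by blast
  then show "x + y \<in> L ` Lam n k"
    by (intro image_eqI[OF _ Lam_add[OF fg]]) (simp add: lin_on_add[OF L fg])
next
  fix c x assume "x \<in> L ` Lam n k"
  then obtain f where f: "f \<in> Lam n k" and "x = L f"
    by blast
  then show "c *\<^sub>R x \<in> L ` Lam n k"
    by (intro image_eqI[OF _ Lam_scale[OF f, of c]]) (simp add: lin_on_scale[OF L f])
qed

lemma lin_on_linear_right_inverse:
  fixes L :: "form \<Rightarrow> 'v::euclidean_space"
  assumes L: "lin_on (Lam n k) L" and surj: "L ` Lam n k = UNIV"
  obtains s where "\<And>x. s x \<in> Lam n k" "\<And>x. L (s x) = x"
    "\<And>x y. s (x + y) = (\<lambda>S. s x S + s y S)" "\<And>c x. s (c *\<^sub>R x) = (\<lambda>S. c * s x S)"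
proof -
  have "\<forall>b. \<exists>\<theta>. \<theta> \<in> Lam n k \<and> L \<theta> = b"
    using surj by (metis UNIV_I imageE)
  then obtain \<sigma> where \<sigma>: "\<And>b. \<sigma> b \<in> Lam n k" "\<And>b. L (\<sigma> b) = b"
    by metis
  define s where "s x = (\<lambda>S. \<Sum>b\<in>Basis. (x \<bullet> b) * \<sigma> b S)" for x
  show thesis
  proof
    show "s x \<in> Lam n k" for x
      unfolding s_def by (rule Lam_sum) (rule \<sigma>)
    show "L (s x) = x" for x
      unfolding s_def
      by (subst lin_on_sum[OF L finite_Basis]) (simp_all add: \<sigma> euclidean_representation)
    show "s (x + y) = (\<lambda>S. s x S + s y S)" for x y
      unfolding s_def by (simp add: algebra_simps sum.distrib)
    show "s (c *\<^sub>R x) = (\<lambda>S. c * s x S)" for c x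
      unfolding s_def by (simp add: sum_distrib_left algebra_simps)
  qed
qed

lemma lin_on_image_eq_UNIV:
  assumes "lin_on (Lam n k) L" "X \<subseteq> L ` Lam n k" "span X = UNIV"
  shows "L ` Lam n k = UNIV"
  using span_minimal[OF assms(2) subspace_lin_on_image[OF assms(1)]] assms(3) by auto

lemma coefficient_sum_sum:
  fixes v :: "nat set \<Rightarrow> 'v::real_vector"
  shows "(\<Sum>D\<in>A. (\<Sum>i\<in>I. c i * F i D) *\<^sub>R v D) = (\<Sum>i\<in>I. c i *\<^sub>R (\<Sum>D\<in>A. F i D *\<^sub>R v D))"
  by (simp add: scaleR_sum_left scaleR_sum_right sum.swap[of _ I])

lemma coefficient_sum_basis_form:
  fixes v :: "nat set \<Rightarrow> 'v::real_vector"
  assumes "finite A" "D \<in> A"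
  shows "(\<Sum>D'\<in>A. basis_form D D' *\<^sub>R v D') = v D"
proof -
  have "(\<Sum>D'\<in>A. basis_form D D' *\<^sub>R v D') = (\<Sum>D'\<in>A. if D' = D then v D' else 0)"
    by (rule sum.cong) (auto simp: basis_form_def)
  then show ?thesis
    using assms by simp
qed

section \<open>Carnot morphisms from free groups and bracket annihilators\<close>

lemma wedge_Lam1_Lam1_repeat:
  assumes "\<theta> \<in> Lam n 1" "\<theta>' \<in> Lam n 1"
  shows "wedge (wedge \<theta> \<theta>') \<theta> = zero_form"
proof -
  have "wedge (wedge \<theta> \<theta>') \<theta> = wedge \<theta> (\<lambda>K. (-1) * wedge \<theta> \<theta>' K)"
    using wedge_commute[OF assms(2,1)] by (simp add: wedge_assoc)
  also have "\<dots> = (\<lambda>K. (-1) * wedge (wedge \<theta> \<theta>) \<theta>' K)"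
    by (simp only: wedge_scale_right wedge_assoc)
  finally show ?thesis
    by (simp add: wedge_self_Lam1[OF assms(1)] lambda_zero_eq_zero_form)
qed

lemma Lam1_Lam2_commute: "\<theta> \<in> Lam n 1 \<Longrightarrow> \<omega> \<in> Lam n 2 \<Longrightarrow> wedge \<theta> \<omega> = wedge \<omega> \<theta>"
  using wedge_commute[of \<theta> n 1 \<omega> 2] by simp

lemma LamPi_kernel_annihilates:
  assumes "carnot_morph_free n br \<pi>\<^sub>1 \<pi>\<^sub>2" and \<eta>: "\<eta> \<in> LamPi n k \<pi>\<^sub>1 \<pi>\<^sub>2"
  shows "\<theta> \<in> Lam n 1 \<Longrightarrow> \<pi>\<^sub>1 \<theta> = 0 \<Longrightarrow> wedge \<theta> \<eta> = zero_form"
    and "\<omega> \<in> Lam n 2 \<Longrightarrow> \<pi>\<^sub>2 \<omega> = 0 \<Longrightarrow> wedge \<omega> \<eta> = zero_form"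
proof -
  have lin: "lin_on (Lam n 1) \<pi>\<^sub>1" "lin_on (Lam n 2) \<pi>\<^sub>2"
    using assms(1) unfolding carnot_morph_free_def by auto
  have ker: "ker_morph n \<pi>\<^sub>1 \<pi>\<^sub>2 \<subseteq> Anh12 n \<eta>"
    using \<eta> unfolding LamPi_def by blast
  show "\<theta> \<in> Lam n 1 \<Longrightarrow> \<pi>\<^sub>1 \<theta> = 0 \<Longrightarrow> wedge \<theta> \<eta> = zero_form"
    using ker lin_on_zero[OF lin(2)] zero_form_in_Lam
    unfolding ker_morph_def Anh12_def by blast
  show "\<omega> \<in> Lam n 2 \<Longrightarrow> \<pi>\<^sub>2 \<omega> = 0 \<Longrightarrow> wedge \<omega> \<eta> = zero_form"
    using ker lin_on_zero[OF lin(1)] zero_form_in_Lam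
    unfolding ker_morph_def Anh12_def by blast
qed

lemma zero_form_in_LamPi: "zero_form \<in> LamPi n k \<pi>\<^sub>1 \<pi>\<^sub>2"
  unfolding LamPi_def Anh12_def ker_morph_def by (auto simp: zero_form_in_Lam)

lemma wedge_eq_if_same_image:
  assumes L: "lin_on (Lam n j) L" and f: "f \<in> Lam n j" and g: "g \<in> Lam n j" and "L f = L g"
    and kernel: "\<And>\<omega>. \<omega> \<in> Lam n j \<Longrightarrow> L \<omega> = 0 \<Longrightarrow> wedge \<omega> \<eta> = zero_form"
  shows "wedge f \<eta> = wedge g \<eta>"
proof -
  have "wedge (\<lambda>S. f S - g S) \<eta> = zero_form"
    using kernel[OF Lam_diff[OF f g]] lin_on_diff[OF L f g] \<open>L f = L g\<close> by simp
  then show ?thesis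
    by (simp add: wedge_diff_left fun_eq_iff)
qed

lemma LamPi_wedge_lift_eq:
  assumes morph: "carnot_morph_free n br \<pi>\<^sub>1 \<pi>\<^sub>2" and \<eta>: "\<eta> \<in> LamPi n k \<pi>\<^sub>1 \<pi>\<^sub>2"
    and \<theta>: "\<theta> \<in> Lam n 1" "\<theta>' \<in> Lam n 1" "\<pi>\<^sub>1 \<theta> = \<pi>\<^sub>1 \<theta>'"
    and \<omega>: "\<omega> \<in> Lam n 2" "\<omega>' \<in> Lam n 2" "\<pi>\<^sub>2 \<omega> = \<pi>\<^sub>2 \<omega>'"
  shows "wedge \<theta> (wedge \<omega> \<eta>) = wedge \<theta>' (wedge \<omega>' \<eta>)"
proof -
  have lin: "lin_on (Lam n 1) \<pi>\<^sub>1" "lin_on (Lam n 2) \<pi>\<^sub>2"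
    using morph unfolding carnot_morph_free_def by auto
  note kernel = LamPi_kernel_annihilates[OF morph \<eta>]
  have "wedge \<theta> (wedge \<omega> \<eta>) = wedge \<omega>' (wedge \<theta> \<eta>)"
    using wedge_eq_if_same_image[OF lin(2) \<omega> kernel(2)]
    by (simp flip: wedge_assoc add: Lam1_Lam2_commute[OF \<theta>(1) \<omega>(2)])
  also have "\<dots> = wedge \<theta>' (wedge \<omega>' \<eta>)"
    using wedge_eq_if_same_image[OF lin(1) \<theta> kernel(1)]
    by (simp flip: wedge_assoc add: Lam1_Lam2_commute[OF \<theta>(2) \<omega>(2)])
  finally show ?thesis .
qed

lemma wedge_pairing_eq_bilinear:
  assumes lin: "lin_on (Lam n 1) \<pi>\<^sub>1" "lin_on (Lam n 2) \<pi>\<^sub>2" and \<Phi>: "bilinear \<Phi>"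
    and basis: "\<And>A D. A \<in> ksubsets n 1 \<Longrightarrow> D \<in> ksubsets n 2 \<Longrightarrow>
      wedge (basis_form A) (wedge (basis_form D) \<eta>) K = \<Phi> (\<pi>\<^sub>1 (basis_form A)) (\<pi>\<^sub>2 (basis_form D))"
    and \<theta>: "\<theta> \<in> Lam n 1" and \<omega>: "\<omega> \<in> Lam n 2"
  shows "wedge \<theta> (wedge \<omega> \<eta>) K = \<Phi> (\<pi>\<^sub>1 \<theta>) (\<pi>\<^sub>2 \<omega>)"
proof -
  have "wedge \<theta> (wedge \<omega> \<eta>) K = (\<Sum>A\<in>ksubsets n 1. \<theta> A * wedge (basis_form A) (wedge \<omega> \<eta>) K)"
    by (simp only: wedge_expansion_left[OF \<theta>])
  also have "\<dots> = (\<Sum>A\<in>ksubsets n 1. \<theta> A *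
      (\<Sum>D\<in>ksubsets n 2. \<omega> D * wedge (basis_form A) (wedge (basis_form D) \<eta>) K))"
    by (simp add: wedge_expansion_left[OF \<omega>] wedge_sum_right)
  also have "\<dots> = (\<Sum>A\<in>ksubsets n 1. \<theta> A *
      (\<Sum>D\<in>ksubsets n 2. \<omega> D * \<Phi> (\<pi>\<^sub>1 (basis_form A)) (\<pi>\<^sub>2 (basis_form D))))"
    by (simp add: basis)
  also have "\<dots> = \<Phi> (\<Sum>A\<in>ksubsets n 1. \<theta> A *\<^sub>R \<pi>\<^sub>1 (basis_form A)) (\<Sum>D\<in>ksubsets n 2. \<omega> D *\<^sub>R \<pi>\<^sub>2 (basis_form D))"
    by (simp add: bilinear_sum[OF \<Phi>] sum.cartesian_product bilinear_lmul[OF \<Phi>] bilinear_rmul[OF \<Phi>]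
        sum_distrib_left mult.left_commute)
  also have "\<dots> = \<Phi> (\<pi>\<^sub>1 \<theta>) (\<pi>\<^sub>2 \<omega>)"
    by (simp add: lin_on_expansion[OF lin(1) \<theta>] lin_on_expansion[OF lin(2) \<omega>])
  finally show ?thesis .
qed

lemma LamPi_if_pairing_factors:
  assumes lin: "lin_on (Lam n 1) \<pi>\<^sub>1" "lin_on (Lam n 2) \<pi>\<^sub>2" and \<Phi>: "bilinear \<Phi>"
    and "3 \<le> n" and \<eta>: "\<eta> \<in> Lam n (n - 3)"
    and pairing: "\<And>\<theta> \<omega>. \<theta> \<in> Lam n 1 \<Longrightarrow> \<omega> \<in> Lam n 2 \<Longrightarrow>
      wedge \<theta> (wedge \<omega> \<eta>) {..<n} = \<Phi> (\<pi>\<^sub>1 \<theta>) (\<pi>\<^sub>2 \<omega>)"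
  shows "\<eta> \<in> LamPi n (n - 3) \<pi>\<^sub>1 \<pi>\<^sub>2"
  unfolding LamPi_def
proof (intro CollectI conjI subsetI \<eta>)
  fix p assume "p \<in> ker_morph n \<pi>\<^sub>1 \<pi>\<^sub>2"
  then obtain \<theta> \<omega> where p: "p = (\<theta>, \<omega>)" and \<theta>: "\<theta> \<in> Lam n 1" "\<pi>\<^sub>1 \<theta> = 0"
    and \<omega>: "\<omega> \<in> Lam n 2" "\<pi>\<^sub>2 \<omega> = 0"
    unfolding ker_morph_def by blast
  have deg: "n - 2 = 1 + (n - 3)" "n - 1 = 2 + (n - 3)" "n - (n - 2) = 2" "n - (n - 1) = 1"
    using \<open>3 \<le> n\<close> by arith+
  have "wedge \<theta> \<eta> = zero_form"
  proof (rule form_eq_zero_by_top_pairing)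
    show "wedge \<theta> \<eta> \<in> Lam n (n - 2)"
      unfolding deg by (rule wedge_in_Lam[OF \<theta>(1) \<eta>])
    fix C assume "C \<in> ksubsets n (n - (n - 2))"
    then have C: "basis_form C \<in> Lam n 2"
      using basis_form_in_Lam deg(3) by metis
    have "wedge (basis_form C) (wedge \<theta> \<eta>) = wedge \<theta> (wedge (basis_form C) \<eta>)"
      by (simp flip: wedge_assoc add: Lam1_Lam2_commute[OF \<theta>(1) C])
    then show "wedge (basis_form C) (wedge \<theta> \<eta>) {..<n} = 0"
      using pairing[OF \<theta>(1) C] \<theta>(2) bilinear_lzero[OF \<Phi>] by simp
  qed
  moreover have "wedge \<omega> \<eta> = zero_form"
  proof (rule form_eq_zero_by_top_pairing)
    show "wedge \<omega> \<eta> \<in> Lam n (n - 1)"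
      unfolding deg by (rule wedge_in_Lam[OF \<omega>(1) \<eta>])
    fix C assume "C \<in> ksubsets n (n - (n - 1))"
    then have "basis_form C \<in> Lam n 1"
      using basis_form_in_Lam deg(4) by metis
    then show "wedge (basis_form C) (wedge \<omega> \<eta>) {..<n} = 0"
      using pairing[OF _ \<omega>(1)] \<omega>(2) bilinear_rzero[OF \<Phi>] by simp
  qed
  ultimately show "p \<in> Anh12 n \<eta>"
    unfolding Anh12_def using p \<theta>(1) \<omega>(1) by simp
qed

definition sorted_triple_apply :: "(nat \<Rightarrow> nat \<Rightarrow> nat \<Rightarrow> 'a) \<Rightarrow> nat set \<Rightarrow> 'a" where
  "sorted_triple_apply T C = T (Min C) (Min (C - {Min C})) (Max C)"

lemma wsign_sorted_triple_apply:
  fixes T :: "nat \<Rightarrow> nat \<Rightarrow> nat \<Rightarrow> real"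
  assumes swap12: "\<And>a b c. T a b c = - T b a c" and swap23: "\<And>a b c. T a b c = - T a c b"
    and "j < k" "i \<noteq> j" "i \<noteq> k"
  shows "wsign {i} {j, k} * sorted_triple_apply T {i, j, k} = T i j k"
proof -
  consider "i < j" | "j < i" "i < k" | "k < i"
    using assms(3-5) by linarith
  then show ?thesis
  proof cases
    case 1
    then have "{d \<in> {j, k}. d < i} = {}" "Min {i, j, k} = i" "{i, j, k} - {i} = {j, k}"
      using \<open>j < k\<close> by auto
    then show ?thesis
      using \<open>j < k\<close> by (simp add: wsign_singleton sorted_triple_apply_def del: Collect_empty_eq)
  next
    case 2
    then have "{d \<in> {j, k}. d < i} = {j}" "Min {i, j, k} = j" "{i, j, k} - {j} = {i, k}"
      using \<open>j < k\<close> by auto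
    then show ?thesis
      using 2 swap12[of j i k] by (simp add: wsign_singleton sorted_triple_apply_def)
  next
    case 3
    then have "{d \<in> {j, k}. d < i} = {j, k}" "Min {i, j, k} = j" "{i, j, k} - {j} = {i, k}"
      using \<open>j < k\<close> by auto
    then show ?thesis
      using 3 \<open>j < k\<close> swap23[of j k i] swap12[of i j k]
      by (simp add: wsign_singleton sorted_triple_apply_def)
  qed
qed

lemma wedge_basis_form_singletons:
  assumes "j < k"
  shows "wedge (basis_form {j}) (basis_form {k}) = basis_form {j, k}"
proof -
  have "{d \<in> {k}. d < j} = {}"
    using assms by auto
  then show ?thesis
    using assms by (simp add: wedge_basis_forms wsign_singleton insert_commute del: Collect_empty_eq)
qed

definition annihilator_dual_form ::
    "nat \<Rightarrow> (form \<Rightarrow> 'a) \<Rightarrow> ('a \<Rightarrow> 'a \<Rightarrow> 'b) \<Rightarrow> ('a \<Rightarrow> 'b \<Rightarrow> real) \<Rightarrow> form" where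
  "annihilator_dual_form n \<pi>\<^sub>1 br \<Phi> = complement_form n 3 (sorted_triple_apply
    (\<lambda>a b c. \<Phi> (\<pi>\<^sub>1 (basis_form {a})) (br (\<pi>\<^sub>1 (basis_form {b})) (\<pi>\<^sub>1 (basis_form {c})))))"

context step2_carnot_group
begin

lemma LamPi_pairing_annihilator:
  assumes sm: "surj_carnot_morph_free n br \<pi>\<^sub>1 \<pi>\<^sub>2" and \<eta>: "\<eta> \<in> LamPi n k \<pi>\<^sub>1 \<pi>\<^sub>2"
  obtains \<Phi> where "bracket_annihilator br \<Phi>"
    and "\<And>\<theta> \<omega>. \<theta> \<in> Lam n 1 \<Longrightarrow> \<omega> \<in> Lam n 2 \<Longrightarrow> \<Phi> (\<pi>\<^sub>1 \<theta>) (\<pi>\<^sub>2 \<omega>) = wedge \<theta> (wedge \<omega> \<eta>) K"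
proof -
  have morph: "carnot_morph_free n br \<pi>\<^sub>1 \<pi>\<^sub>2"
    and lin: "lin_on (Lam n 1) \<pi>\<^sub>1" "lin_on (Lam n 2) \<pi>\<^sub>2"
    and hom: "\<And>\<theta> \<theta>'. \<theta> \<in> Lam n 1 \<Longrightarrow> \<theta>' \<in> Lam n 1 \<Longrightarrow> \<pi>\<^sub>2 (wedge \<theta> \<theta>') = br (\<pi>\<^sub>1 \<theta>) (\<pi>\<^sub>1 \<theta>')"
    and onto: "\<pi>\<^sub>1 ` Lam n 1 = UNIV" "\<pi>\<^sub>2 ` Lam n 2 = UNIV"
    using sm unfolding surj_carnot_morph_free_def carnot_morph_free_def by auto
  obtain s\<^sub>1 where s\<^sub>1: "\<And>x. s\<^sub>1 x \<in> Lam n 1" "\<And>x. \<pi>\<^sub>1 (s\<^sub>1 x) = x"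
    "\<And>x y. s\<^sub>1 (x + y) = (\<lambda>S. s\<^sub>1 x S + s\<^sub>1 y S)" "\<And>c x. s\<^sub>1 (c *\<^sub>R x) = (\<lambda>S. c * s\<^sub>1 x S)"
    using lin_on_linear_right_inverse[OF lin(1) onto(1)] by blast
  obtain s\<^sub>2 where s\<^sub>2: "\<And>z. s\<^sub>2 z \<in> Lam n 2" "\<And>z. \<pi>\<^sub>2 (s\<^sub>2 z) = z"
    "\<And>z w. s\<^sub>2 (z + w) = (\<lambda>S. s\<^sub>2 z S + s\<^sub>2 w S)" "\<And>c z. s\<^sub>2 (c *\<^sub>R z) = (\<lambda>S. c * s\<^sub>2 z S)"
    using lin_on_linear_right_inverse[OF lin(2) onto(2)] by blast
  define \<Phi> where "\<Phi> x z = wedge (s\<^sub>1 x) (wedge (s\<^sub>2 z) \<eta>) K" for x z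
  have lift: "\<Phi> (\<pi>\<^sub>1 \<theta>) (\<pi>\<^sub>2 \<omega>) = wedge \<theta> (wedge \<omega> \<eta>) K" if "\<theta> \<in> Lam n 1" "\<omega> \<in> Lam n 2" for \<theta> \<omega>
    unfolding \<Phi>_def using LamPi_wedge_lift_eq[OF morph \<eta> s\<^sub>1(1) that(1) _ s\<^sub>2(1) that(2)] s\<^sub>1(2) s\<^sub>2(2)
    by simp
  have "bilinear \<Phi>"
    by (rule bilinearI) (simp_all add: \<Phi>_def s\<^sub>1 s\<^sub>2 wedge_add_left wedge_add_right
        wedge_scale_left wedge_scale_right)
  moreover have "\<Phi> y (br x y) = 0" for x y
  proof -
    have "\<Phi> y (br x y) = wedge (s\<^sub>1 y) (wedge (wedge (s\<^sub>1 x) (s\<^sub>1 y)) \<eta>) K"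
      using lift[OF s\<^sub>1(1) wedge_Lam1_in_Lam2[OF s\<^sub>1(1) s\<^sub>1(1)]] hom[OF s\<^sub>1(1) s\<^sub>1(1)] s\<^sub>1(2) by simp
    then show ?thesis
      by (simp flip: wedge_assoc add: wedge_Lam1_Lam1_repeat[OF s\<^sub>1(1) s\<^sub>1(1)])
  qed
  ultimately show thesis
    using that lift unfolding bracket_annihilator_def by blast
qed

theorem LamPi_trivial_if_no_annihilator:
  assumes no_annihilator: "\<And>\<Phi>. bracket_annihilator br \<Phi> \<Longrightarrow> \<Phi> = (\<lambda>x z. 0)"
    and sm: "surj_carnot_morph_free n br \<pi>\<^sub>1 \<pi>\<^sub>2" and "k + 3 \<le> n"
  shows "LamPi n k \<pi>\<^sub>1 \<pi>\<^sub>2 = {zero_form}"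
proof (rule ccontr)
  assume "LamPi n k \<pi>\<^sub>1 \<pi>\<^sub>2 \<noteq> {zero_form}"
  then obtain \<eta> where \<eta>: "\<eta> \<in> LamPi n k \<pi>\<^sub>1 \<pi>\<^sub>2" and "\<eta> \<noteq> zero_form"
    using zero_form_in_LamPi by blast
  then obtain I where I: "\<eta> I \<noteq> 0"
    by (auto simp: form_eq_zero_iff)
  then have "I \<subseteq> {..<n}" "card I = k"
    using \<eta> unfolding LamPi_def Lam_def by auto
  then have "3 \<le> card ({..<n} - I)"
    using \<open>k + 3 \<le> n\<close> by (simp add: card_Diff_subset finite_subset)
  then obtain T where T: "T \<subseteq> {..<n} - I" "card T = 3"
    by (meson obtain_subset_with_card_n)
  then obtain a b c where abc: "T = {a, b, c}" "a \<noteq> b" "b \<noteq> c" "a \<noteq> c"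
    by (auto simp: card_3_iff)
  \<comment> \<open>On \<open>K = T \<union> I\<close> the pairing of \<open>e\<^sub>a\<close> and \<open>e\<^sub>b \<and> e\<^sub>c\<close> with \<open>\<eta>\<close> is \<open>\<plusminus>\<eta> I\<close>.\<close>
  define K where "K = T \<union> I"
  obtain \<Phi> where \<Phi>: "bracket_annihilator br \<Phi>"
    and pairing: "\<And>\<theta> \<omega>. \<theta> \<in> Lam n 1 \<Longrightarrow> \<omega> \<in> Lam n 2 \<Longrightarrow> \<Phi> (\<pi>\<^sub>1 \<theta>) (\<pi>\<^sub>2 \<omega>) = wedge \<theta> (wedge \<omega> \<eta>) K"
    using LamPi_pairing_annihilator[OF sm \<eta>] by blast
  have "\<Phi> = (\<lambda>x z. 0)"
    using no_annihilator[OF \<Phi>] .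
  moreover have "basis_form {a} \<in> Lam n 1" "basis_form {b, c} \<in> Lam n 2"
    using T abc by (auto intro!: basis_form_in_Lam simp: ksubsets_def)
  moreover have "wedge (basis_form {a}) (wedge (basis_form {b, c}) \<eta>) K
      = wsign {a} {b, c} * (wsign T I * \<eta> I)"
    using T abc \<open>I \<subseteq> {..<n}\<close>
    by (simp flip: wedge_assoc add: wedge_basis_forms wedge_scale_left wedge_basis_form_left
        K_def finite_subset insert_commute Diff_triv)
  ultimately show False
    using pairing I wsign_nonzero by fastforce
qed

lemma bracket_annihilator_alternating:
  assumes "bracket_annihilator br \<Phi>"
  shows "\<Phi> u (br v w) = - \<Phi> v (br u w)" and "\<Phi> u (br u v) = 0"
proof -
  have \<Phi>: "bilinear \<Phi>" and ann: "\<And>x y. \<Phi> y (br x y) = 0"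
    using assms unfolding bracket_annihilator_def by auto
  have "\<Phi> (u + v) (br w (u + v)) = 0"
    by (rule ann)
  then have "\<Phi> u (br w v) = - \<Phi> v (br w u)"
    using ann[where x=w and y=u] ann[where x=w and y=v]
    by (simp add: br_linear_simps bilinear_ladd[OF \<Phi>] bilinear_radd[OF \<Phi>] eq_neg_iff_add_eq_0)
  then show "\<Phi> u (br v w) = - \<Phi> v (br u w)"
    using br_antisym[of v w] br_antisym[of u w] by (simp add: bilinear_rneg[OF \<Phi>])
  show "\<Phi> u (br u v) = 0"
    using ann[where x=v and y=u] br_antisym[of u v] by (simp add: bilinear_rneg[OF \<Phi>])
qed

lemma wedge_basis_annihilator_dual_form:
  assumes \<Phi>: "bracket_annihilator br \<Phi>" and "i < n" "j < k" "k < n"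
  shows "wedge (basis_form {i}) (wedge (basis_form {j, k}) (annihilator_dual_form n \<pi>\<^sub>1 br \<Phi>)) {..<n}
    = \<Phi> (\<pi>\<^sub>1 (basis_form {i})) (br (\<pi>\<^sub>1 (basis_form {j})) (\<pi>\<^sub>1 (basis_form {k})))"
proof -
  have bil: "bilinear \<Phi>"
    using \<Phi> unfolding bracket_annihilator_def by blast
  note alt = bracket_annihilator_alternating[OF \<Phi>]
  define x where "x i = \<pi>\<^sub>1 (basis_form {i})" for i
  define T where "T a b c = \<Phi> (x a) (br (x b) (x c))" for a b c
  have swap12: "T a b c = - T b a c" for a b c
    unfolding T_def by (rule alt(1))
  have swap23: "T a b c = - T a c b" for a b c
    unfolding T_def using br_antisym[of "x b" "x c"] by (simp add: bilinear_rneg[OF bil])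
  show ?thesis
  proof (cases "i \<in> {j, k}")
    case True
    then have "T i j k = 0"
      using alt(1)[of "x k" "x j" "x k"] alt(2) by (auto simp: T_def bilinear_rzero[OF bil])
    with True show ?thesis
      by (simp flip: wedge_assoc add: wedge_basis_forms T_def x_def)
  next
    case False
    then have "insert i {j, k} \<in> ksubsets n 3"
      using assms(2-4) by (auto simp: ksubsets_def)
    then show ?thesis
      using False wsign_sorted_triple_apply[OF swap12 swap23 \<open>j < k\<close>, of i]
      by (simp flip: wedge_assoc add: wedge_basis_forms wedge_scale_left wedge_complement_form
          annihilator_dual_form_def T_def x_def insert_commute)
  qed
qed

lemma wedge_annihilator_dual_form:
  assumes morph: "carnot_morph_free n br \<pi>\<^sub>1 \<pi>\<^sub>2" and \<Phi>: "bracket_annihilator br \<Phi>"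
    and \<theta>: "\<theta> \<in> Lam n 1" and \<omega>: "\<omega> \<in> Lam n 2"
  shows "wedge \<theta> (wedge \<omega> (annihilator_dual_form n \<pi>\<^sub>1 br \<Phi>)) {..<n} = \<Phi> (\<pi>\<^sub>1 \<theta>) (\<pi>\<^sub>2 \<omega>)"
proof -
  have lin: "lin_on (Lam n 1) \<pi>\<^sub>1" "lin_on (Lam n 2) \<pi>\<^sub>2"
    and hom: "\<And>\<theta> \<theta>'. \<theta> \<in> Lam n 1 \<Longrightarrow> \<theta>' \<in> Lam n 1 \<Longrightarrow> \<pi>\<^sub>2 (wedge \<theta> \<theta>') = br (\<pi>\<^sub>1 \<theta>) (\<pi>\<^sub>1 \<theta>')"
    using morph unfolding carnot_morph_free_def by auto
  have bil: "bilinear \<Phi>"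
    using \<Phi> unfolding bracket_annihilator_def by blast
  show ?thesis
  proof (rule wedge_pairing_eq_bilinear[OF lin bil _ \<theta> \<omega>])
    fix A D assume "A \<in> ksubsets n 1" "D \<in> ksubsets n 2"
    then obtain i j k where ijk: "A = {i}" "D = {j, k}" "i < n" "j < k" "k < n"
      unfolding ksubsets_one ksubsets_two by auto
    then have "\<pi>\<^sub>2 (basis_form D) = br (\<pi>\<^sub>1 (basis_form {j})) (\<pi>\<^sub>1 (basis_form {k}))"
      using hom[of "basis_form {j}" "basis_form {k}"]
      by (simp add: wedge_basis_form_singletons basis_form_in_Lam ksubsets_def)
    then show "wedge (basis_form A) (wedge (basis_form D) (annihilator_dual_form n \<pi>\<^sub>1 br \<Phi>)) {..<n}
        = \<Phi> (\<pi>\<^sub>1 (basis_form A)) (\<pi>\<^sub>2 (basis_form D))"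
      using wedge_basis_annihilator_dual_form[OF \<Phi>, of i n j k] ijk by simp
  qed
qed

theorem LamPi_nontrivial_if_annihilator:
  assumes \<Phi>: "bracket_annihilator br \<Phi>" "\<Phi> \<noteq> (\<lambda>x z. 0)"
    and sm: "surj_carnot_morph_free n br \<pi>\<^sub>1 \<pi>\<^sub>2" and "3 \<le> n"
  shows "LamPi n (n - 3) \<pi>\<^sub>1 \<pi>\<^sub>2 \<noteq> {zero_form}"
proof -
  have morph: "carnot_morph_free n br \<pi>\<^sub>1 \<pi>\<^sub>2"
    and lin: "lin_on (Lam n 1) \<pi>\<^sub>1" "lin_on (Lam n 2) \<pi>\<^sub>2"
    and onto: "\<pi>\<^sub>1 ` Lam n 1 = UNIV" "\<pi>\<^sub>2 ` Lam n 2 = UNIV"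
    using sm unfolding surj_carnot_morph_free_def carnot_morph_free_def by auto
  let ?\<eta> = "annihilator_dual_form n \<pi>\<^sub>1 br \<Phi>"
  note pairing = wedge_annihilator_dual_form[OF morph \<Phi>(1)]
  have "?\<eta> \<in> LamPi n (n - 3) \<pi>\<^sub>1 \<pi>\<^sub>2"
    using LamPi_if_pairing_factors[OF lin _ \<open>3 \<le> n\<close> _ pairing] \<Phi>(1)
    by (simp add: bracket_annihilator_def annihilator_dual_form_def complement_form_in_Lam)
  moreover obtain x z where "\<Phi> x z \<noteq> 0"
    using \<Phi>(2) by (auto simp: fun_eq_iff)
  moreover obtain \<theta> \<omega> where "\<theta> \<in> Lam n 1" "\<pi>\<^sub>1 \<theta> = x" "\<omega> \<in> Lam n 2" "\<pi>\<^sub>2 \<omega> = z"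
    using onto by (metis UNIV_I imageE)
  ultimately show ?thesis
    using pairing by force
qed

lemma coefficient_sum_singleton:
  fixes v :: "nat \<Rightarrow> 'v::real_vector"
  shows "i < n \<Longrightarrow> (\<Sum>D\<in>ksubsets n 1. basis_form {i} D *\<^sub>R v (Min D)) = v i"
  using coefficient_sum_basis_form[OF finite_ksubsets, of "{i}" n 1 "\<lambda>D. v (Min D)"]
  by (simp add: ksubsets_def)

lemma coefficient_sum_wedge_singletons:
  fixes v :: "nat \<Rightarrow> 'a"
  assumes "i < n" "j < n"
  shows "(\<Sum>D\<in>ksubsets n 2. wedge (basis_form {i}) (basis_form {j}) D *\<^sub>R br (v (Min D)) (v (Max D)))
    = br (v i) (v j)"
proof -
  note sum_basis = coefficient_sum_basis_form[OF finite_ksubsets, where v = "\<lambda>D. br (v (Min D)) (v (Max D))"]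
  consider "i = j" | "i < j" | "j < i"
    by linarith
  then show ?thesis
  proof cases
    case 1
    then show ?thesis
      by (simp add: wedge_basis_forms)
  next
    case 2
    then show ?thesis
      using sum_basis[of "{i, j}" n 2] assms by (simp add: wedge_basis_form_singletons ksubsets_def)
  next
    case 3
    then have "wedge (basis_form {i}) (basis_form {j}) = (\<lambda>K. (-1) * basis_form {j, i} K)"
      using wedge_commute[of "basis_form {i}" n 1 "basis_form {j}" 1] assms
      by (simp add: wedge_basis_form_singletons basis_form_in_Lam ksubsets_def)
    then show ?thesis
      using sum_basis[of "{j, i}" n 2] assms 3 br_antisym[of "v i"] by (simp add: ksubsets_def sum_negf)
  qed
qed

lemma carnot_morph_free_generated:
  fixes n :: nat and v :: "nat \<Rightarrow> 'a"
  defines "\<pi>\<^sub>1 \<equiv> \<lambda>\<theta>. \<Sum>D\<in>ksubsets n 1. \<theta> D *\<^sub>R v (Min D)"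
    and "\<pi>\<^sub>2 \<equiv> \<lambda>\<omega>. \<Sum>D\<in>ksubsets n 2. \<omega> D *\<^sub>R br (v (Min D)) (v (Max D))"
  shows "carnot_morph_free n br \<pi>\<^sub>1 \<pi>\<^sub>2"
proof -
  have lin: "lin_on (Lam n 1) \<pi>\<^sub>1" "lin_on (Lam n 2) \<pi>\<^sub>2"
    unfolding \<pi>\<^sub>1_def \<pi>\<^sub>2_def by (rule lin_on_coefficient_sum)+
  have basis: "\<pi>\<^sub>2 (wedge (basis_form A) (basis_form B)) = br (\<pi>\<^sub>1 (basis_form A)) (\<pi>\<^sub>1 (basis_form B))"
    if AB: "A \<in> ksubsets n 1" "B \<in> ksubsets n 1" for A B
  proof -
    obtain i j where "A = {i}" "B = {j}" "i < n" "j < n"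
      using AB unfolding ksubsets_one by auto
    then show ?thesis
      using coefficient_sum_wedge_singletons[of i n j v] coefficient_sum_singleton[of i n v]
        coefficient_sum_singleton[of j n v]
      by (simp add: \<pi>\<^sub>1_def \<pi>\<^sub>2_def)
  qed
  have "\<pi>\<^sub>2 (wedge \<theta> \<theta>') = br (\<pi>\<^sub>1 \<theta>) (\<pi>\<^sub>1 \<theta>')" if "\<theta> \<in> Lam n 1" "\<theta>' \<in> Lam n 1" for \<theta> \<theta>'
  proof -
    have "\<pi>\<^sub>2 (wedge \<theta> \<theta>') = (\<Sum>A\<in>ksubsets n 1. \<theta> A *\<^sub>R \<pi>\<^sub>2 (wedge (basis_form A) \<theta>'))"
      unfolding \<pi>\<^sub>2_def by (simp only: wedge_expansion_left[OF that(1)] coefficient_sum_sum)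
    also have "\<dots> = (\<Sum>A\<in>ksubsets n 1. \<theta> A *\<^sub>R (\<Sum>B\<in>ksubsets n 1. \<theta>' B *\<^sub>R
        \<pi>\<^sub>2 (wedge (basis_form A) (basis_form B))))"
      unfolding \<pi>\<^sub>2_def by (simp only: wedge_expansion_right[OF that(2)] coefficient_sum_sum)
    also have "\<dots> = br (\<Sum>A\<in>ksubsets n 1. \<theta> A *\<^sub>R \<pi>\<^sub>1 (basis_form A)) (\<Sum>B\<in>ksubsets n 1. \<theta>' B *\<^sub>R \<pi>\<^sub>1 (basis_form B))"
      by (simp add: basis bilinear_sum[OF bilinear_br] sum.cartesian_product br_linear_simps scaleR_sum_right)
        (simp add: mult.commute)
    also have "\<dots> = br (\<pi>\<^sub>1 \<theta>) (\<pi>\<^sub>1 \<theta>')"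
      using lin_on_expansion[OF lin(1) that(1)] lin_on_expansion[OF lin(1) that(2)] by simp
    finally show ?thesis .
  qed
  then show ?thesis
    unfolding carnot_morph_free_def using lin by blast
qed

lemma ex_surj_carnot_morph_free: "\<exists>\<pi>\<^sub>1 \<pi>\<^sub>2. surj_carnot_morph_free DIM('a) br \<pi>\<^sub>1 \<pi>\<^sub>2"
proof -
  obtain v :: "nat \<Rightarrow> 'a" where v: "bij_betw v {..<DIM('a)} Basis"
    using ex_bij_betw_nat_finite[of "Basis :: 'a set"] by (auto simp: atLeast0LessThan)
  define \<pi>\<^sub>1 where "\<pi>\<^sub>1 \<theta> = (\<Sum>D\<in>ksubsets DIM('a) 1. \<theta> D *\<^sub>R v (Min D))" for \<theta>
  define \<pi>\<^sub>2 where "\<pi>\<^sub>2 \<omega> = (\<Sum>D\<in>ksubsets DIM('a) 2. \<omega> D *\<^sub>R br (v (Min D)) (v (Max D)))" for \<omega>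
  have morph: "carnot_morph_free DIM('a) br \<pi>\<^sub>1 \<pi>\<^sub>2"
    unfolding \<pi>\<^sub>1_def[abs_def] \<pi>\<^sub>2_def[abs_def] by (rule carnot_morph_free_generated)
  then have lin: "lin_on (Lam DIM('a) 1) \<pi>\<^sub>1" "lin_on (Lam DIM('a) 2) \<pi>\<^sub>2"
    and hom: "\<And>\<theta> \<theta>'. \<theta> \<in> Lam DIM('a) 1 \<Longrightarrow> \<theta>' \<in> Lam DIM('a) 1 \<Longrightarrow>
      \<pi>\<^sub>2 (wedge \<theta> \<theta>') = br (\<pi>\<^sub>1 \<theta>) (\<pi>\<^sub>1 \<theta>')"
    unfolding carnot_morph_free_def by auto
  have "Basis \<subseteq> \<pi>\<^sub>1 ` Lam DIM('a) 1"
  proof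
    fix b :: 'a assume "b \<in> Basis"
    then obtain i where i: "i < DIM('a)" "b = v i"
      using v by (auto simp: bij_betw_def)
    then have "basis_form {i} \<in> Lam DIM('a) 1"
      by (simp add: basis_form_in_Lam ksubsets_def)
    then show "b \<in> \<pi>\<^sub>1 ` Lam DIM('a) 1"
      by (rule image_eqI[rotated]) (unfold \<pi>\<^sub>1_def i(2), rule coefficient_sum_singleton[OF i(1), symmetric])
  qed
  then have onto\<^sub>1: "\<pi>\<^sub>1 ` Lam DIM('a) 1 = UNIV"
    by (rule lin_on_image_eq_UNIV[OF lin(1) _ span_Basis])
  have "{br x y | x y. True} \<subseteq> \<pi>\<^sub>2 ` Lam DIM('a) 2"
  proof clarify
    fix x y :: 'a
    obtain \<theta> \<theta>' where \<theta>: "\<theta> \<in> Lam DIM('a) 1" "\<theta>' \<in> Lam DIM('a) 1"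
      and "\<pi>\<^sub>1 \<theta> = x" "\<pi>\<^sub>1 \<theta>' = y"
      using onto\<^sub>1 by (metis UNIV_I imageE)
    then show "br x y \<in> \<pi>\<^sub>2 ` Lam DIM('a) 2"
      by (intro image_eqI[OF _ wedge_Lam1_in_Lam2[OF \<theta>]]) (simp add: hom)
  qed
  then have "\<pi>\<^sub>2 ` Lam DIM('a) 2 = UNIV"
    by (rule lin_on_image_eq_UNIV[OF lin(2) _ span_brackets])
  then show ?thesis
    using morph onto\<^sub>1 unfolding surj_carnot_morph_free_def by blast
qed

end

theorem theorem5p11:
  fixes br :: "'a::euclidean_space \<Rightarrow> 'a \<Rightarrow> 'b::euclidean_space"
  assumes "step2_carnot br"
    and "DIM('a) \<ge> 3"
  defines "r \<equiv> DIM('a)"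
  shows "({f. h_affine br f} = {f. affine_fun f}
           \<longleftrightarrow> (\<forall>n (pi1 :: form \<Rightarrow> 'a) (pi2 :: form \<Rightarrow> 'b).
                 n \<ge> r \<and> surj_carnot_morph_free n br pi1 pi2 \<longrightarrow>
                 (\<forall>k. n - r \<le> k \<and> k \<le> n - 3 \<longrightarrow> LamPi n k pi1 pi2 = {zero_form})))
       \<and> ({f. h_affine br f} = {f. affine_fun f}
           \<longleftrightarrow> (\<exists>(pi1 :: form \<Rightarrow> 'a) (pi2 :: form \<Rightarrow> 'b).
                 surj_carnot_morph_free r br pi1 pi2 \<and> LamPi r (r - 3) pi1 pi2 = {zero_form}))
       \<and> ({f. h_affine br f} = {f. affine_fun f}
           \<longleftrightarrow> (\<exists>n (pi1 :: form \<Rightarrow> 'a) (pi2 :: form \<Rightarrow> 'b).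
                 n \<ge> r \<and> surj_carnot_morph_free n br pi1 pi2 \<and> LamPi n (n - 3) pi1 pi2 = {zero_form}))"
proof -
  interpret step2_carnot_group br
    by (rule step2_carnot_group.intro) (rule assms(1))
  have "3 \<le> r"
    using assms(2) by (simp add: r_def)
  obtain p\<^sub>1 :: "form \<Rightarrow> 'a" and p\<^sub>2 :: "form \<Rightarrow> 'b" where p: "surj_carnot_morph_free r br p\<^sub>1 p\<^sub>2"
    using ex_surj_carnot_morph_free unfolding r_def by blast
  let ?no_annihilator = "\<forall>\<Phi>. bracket_annihilator br \<Phi> \<longrightarrow> \<Phi> = (\<lambda>x z. 0)"
  show ?thesis (is "(?A \<longleftrightarrow> ?ii) \<and> (?A \<longleftrightarrow> ?iii) \<and> (?A \<longleftrightarrow> ?iv)")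
  proof -
    have "?A \<longleftrightarrow> ?no_annihilator"
      by (rule h_affine_eq_affine_iff)
    moreover have "?no_annihilator \<Longrightarrow> ?ii"
      using LamPi_trivial_if_no_annihilator \<open>3 \<le> r\<close> by (auto simp: le_diff_conv2)
    moreover have "?ii \<Longrightarrow> ?iii"
      using p by fastforce
    moreover have "?iii \<Longrightarrow> ?iv"
      by blast
    moreover have "?iv \<Longrightarrow> ?no_annihilator"
      using LamPi_nontrivial_if_annihilator \<open>3 \<le> r\<close> by fastforce
    ultimately show ?thesis
      by blast
  qed
qed

end
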